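(* Let $T\in\mathcal M_n$, and let $f,g:[0,\infty)\to[0,\infty)$ be continuous with $f(t)g(t)=t$ for all $t\ge0$. Then \[\begin{bmatrix} f^2(|T|)+f^2(|T^*|) & \mathfrak RT+\mathfrak IT\\ \mathfrak RT+\mathfrak IT & g^2(|T|)+g^2(|T^*|)\end{bmatrix}\ge O,\] and consequently \[\pm(\mathfrak RT+\mathfrak IT)\le\big(f^2(|T|)+f^2(|T^*|)\big)\sharp\big(g^2(|T|)+g^2(|T^*|)\big).\] In particular, $\pm(\mathfrak RT+\mathfrak IT)\le|T|+|T^*|$.
   Context: $\mathcal M_n$ denotes the algebra of $n\times n$ complex matrices; $O$ the zero matrix. $X\ge Y$ means $X-Y$ is positive semidefinite. $|X|=(X^*X)^{1/2}$; functions of positive semidefinite matrices are defined by functional calculus. $\mathfrak RT=\frac{T+T^*}{2}$, $\mathfrak IT=\frac{T-T^*}{2i}$. For positive definite $A,B$, $A\sharp B=A^{1/2}(A^{-1/2}BA^{-1/2})^{1/2}A^{1/2}$; for positive semidefinite $A,B$, $A\sharp B=\lim_{\varepsilon\to0^+}(A+\varepsilon I)\sharp(B+\varepsilon I)$. *)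

theory Defs
  imports "HOL-Analysis.Analysis"
begin

definition adj :: "complex^'n^'m \<Rightarrow> complex^'m^'n" where
  "adj A = (\<chi> i j. cnj (A $ j $ i))"

definition cscale :: "complex \<Rightarrow> complex^'n^'m \<Rightarrow> complex^'n^'m" where
  "cscale c A = (\<chi> i j. c * A $ i $ j)"

definition rdiag :: "('n::finite \<Rightarrow> real) \<Rightarrow> complex^'n^'n" where
  "rdiag d = (\<chi> i j. if i = j then complex_of_real (d i) else 0)"

definition unitary :: "complex^'n^'n \<Rightarrow> bool" where
  "unitary U \<longleftrightarrow> adj U ** U = mat 1"

definition hermitian :: "complex^'n^'n \<Rightarrow> bool" where
  "hermitian A \<longleftrightarrow> adj A = A"

definition psd :: "complex^'n^'n \<Rightarrow> bool" where
  "psd A \<longleftrightarrow> hermitian A \<and>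
     (\<forall>x::complex^'n. 0 \<le> Re (\<Sum>i\<in>UNIV. \<Sum>j\<in>UNIV. cnj (x $ i) * A $ i $ j * x $ j))"

definition loewner_le :: "complex^'n^'n \<Rightarrow> complex^'n^'n \<Rightarrow> bool" where
  "loewner_le X Y \<longleftrightarrow> psd (Y - X)"

definition mfun :: "(real \<Rightarrow> real) \<Rightarrow> complex^'n::finite^'n \<Rightarrow> complex^'n^'n" where
  "mfun f A = (SOME B. \<exists>U d. unitary U \<and> A = U ** rdiag d ** adj U \<and>
                             B = U ** rdiag (f \<circ> d) ** adj U)"

definition mabs :: "complex^'n::finite^'n \<Rightarrow> complex^'n^'n" where
  "mabs T = mfun sqrt (adj T ** T)"

definition ReM :: "complex^'n::finite^'n \<Rightarrow> complex^'n^'n" where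
  "ReM T = cscale (1/2) (T + adj T)"

definition ImM :: "complex^'n::finite^'n \<Rightarrow> complex^'n^'n" where
  "ImM T = cscale (1/(2*\<i>)) (T - adj T)"

definition gmean_pd :: "complex^'n::finite^'n \<Rightarrow> complex^'n^'n \<Rightarrow> complex^'n^'n" where
  "gmean_pd A B = mfun sqrt A **
      mfun sqrt (mfun (\<lambda>t. 1 / sqrt t) A ** B ** mfun (\<lambda>t. 1 / sqrt t) A) ** mfun sqrt A"

definition gmean :: "complex^'n::finite^'n \<Rightarrow> complex^'n^'n \<Rightarrow> complex^'n^'n" where
  "gmean A B = Lim (at_right (0::real))
      (\<lambda>\<epsilon>. gmean_pd (A + cscale (of_real \<epsilon>) (mat 1)) (B + cscale (of_real \<epsilon>) (mat 1)))"

definition blockM :: "complex^'n^'n \<Rightarrow> complex^'n^'n \<Rightarrow> complex^'n^'n \<Rightarrow> complex^'n^'n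
    \<Rightarrow> complex^('n + 'n)^('n + 'n)" where
  "blockM A B C D = (\<chi> i j. case i of
       Inl a \<Rightarrow> (case j of Inl b \<Rightarrow> A $ a $ b | Inr b \<Rightarrow> B $ a $ b)
     | Inr a \<Rightarrow> (case j of Inl b \<Rightarrow> C $ a $ b | Inr b \<Rightarrow> D $ a $ b))"

end

theory Submission
  imports Defs
begin

text \<open>Kittaneh's mixed Schwarz inequality
  \<open>\<bar>\<langle>y, S x\<rangle>\<bar>\<^sup>2 \<le> \<langle>x, f\<^sup>2(|S|) x\<rangle> \<langle>y, g\<^sup>2(|S\<^sup>*|) y\<rangle>\<close>, proved from a singular value
  decomposition of \<open>S\<close> and Bessel's inequality, bounds \<open>2 \<bar>\<langle>y, T x\<rangle>\<bar>\<close> and \<open>2 \<bar>\<langle>y, T\<^sup>* x\<rangle>\<bar>\<close>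
  by the quadratic forms of the diagonal blocks (AM-GM). As
  \<open>Re T + Im T = ((1 - i) T + (1 + i) T\<^sup>*) / 2\<close> has coefficients of modulus at most 1, the block
  matrix \<open>[[F, X], [X, G]]\<close> is positive.

  A positive block matrix \<open>[[A, X], [X, B]]\<close> satisfies \<open>X \<le> A \<sharp> B\<close>. For invertible \<open>A\<close>,
  congruence by \<open>A\<^sup>-\<^sup>1\<^sup>/\<^sup>2\<close> reduces this to the case \<open>A = 1\<close>, where positivity at
  \<open>(- W y, y)\<close> gives \<open>W\<^sup>2 \<le> C\<close>, and monotonicity of the square root gives
  \<open>W \<le> |W| \<le> C\<^sup>1\<^sup>/\<^sup>2\<close>. In general \<open>(A + \<epsilon>) \<sharp> (B + \<epsilon>)\<close> decreases as \<open>\<epsilon> \<down> 0\<close> and stays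
  above \<open>X\<close>, so its limit does too. Replacing \<open>X\<close> by \<open>- X\<close> handles \<open>- X\<close>, and for
  \<open>f = g = sqrt\<close> both diagonal blocks are \<open>|T| + |T\<^sup>*|\<close>, where positivity at \<open>(x, - x)\<close> gives
  \<open>\<plusminus> X \<le> |T| + |T\<^sup>*|\<close> directly.\<close>

section \<open>Sesquilinear inner product and adjoints\<close>

definition cinner :: "complex^'n \<Rightarrow> complex^'n \<Rightarrow> complex" where
  "cinner x y = (\<Sum>i\<in>UNIV. cnj (x $ i) * y $ i)"

lemma adj_nth [simp]: "adj A $ i $ j = cnj (A $ j $ i)"
  by (simp add: adj_def)

lemma adj_adj [simp]: "adj (adj A) = A"
  by (simp add: vec_eq_iff)

lemma adj_mult: "adj (A ** B) = adj B ** adj A"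
  by (simp add: vec_eq_iff matrix_matrix_mult_def mult.commute)

lemma adj_add: "adj (A + B) = adj A + adj B"
  by (simp add: vec_eq_iff)

lemma adj_diff: "adj (A - B) = adj A - adj B"
  by (simp add: vec_eq_iff)

lemma adj_uminus: "adj (- A) = - adj A"
  by (simp add: vec_eq_iff)

lemma adj_mat_1 [simp]: "adj (mat 1 :: complex^'n^'n) = mat 1"
  by (simp add: vec_eq_iff mat_def)

lemma cscale_nth [simp]: "cscale c A $ i $ j = c * A $ i $ j"
  by (simp add: cscale_def)

lemma adj_cscale: "adj (cscale c A) = cscale (cnj c) (adj A)"
  by (simp add: vec_eq_iff)

lemma rdiag_nth [simp]: "rdiag d $ i $ j = (if i = j then complex_of_real (d i) else 0)"
  by (simp add: rdiag_def)

lemma adj_rdiag [simp]: "adj (rdiag d) = rdiag d"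
  by (simp add: vec_eq_iff)

lemma rdiag_one: "rdiag (\<lambda>i. 1) = mat 1"
  by (simp add: vec_eq_iff mat_def)

lemma matrix_mul_rdiag_nth: "(A ** rdiag d) $ i $ j = A $ i $ j * d j"
proof -
  have "(A ** rdiag d) $ i $ j = (\<Sum>k\<in>UNIV. if k = j then A $ i $ j * d j else 0)"
    unfolding matrix_matrix_mult_def vec_lambda_beta by (rule sum.cong) auto
  then show ?thesis by simp
qed

lemma rdiag_matrix_mul_nth: "(rdiag d ** A) $ i $ j = d i * A $ i $ j"
proof -
  have "(rdiag d ** A) $ i $ j = (\<Sum>k\<in>UNIV. if k = i then d i * A $ i $ j else 0)"
    unfolding matrix_matrix_mult_def vec_lambda_beta by (rule sum.cong) auto
  then show ?thesis by simp
qed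

lemma rdiag_mult: "rdiag a ** rdiag b = rdiag (\<lambda>i. a i * b i)"
  unfolding vec_eq_iff matrix_mul_rdiag_nth by auto

lemma rdiag_diff: "rdiag a - rdiag b = rdiag (\<lambda>i. a i - b i)"
  by (simp add: vec_eq_iff)

lemma rdiag_mv_nth: "(rdiag d *v x) $ i = d i * x $ i"
proof -
  have "(rdiag d *v x) $ i = (\<Sum>k\<in>UNIV. if k = i then d i * x $ i else 0)"
    unfolding matrix_vector_mult_def vec_lambda_beta by (rule sum.cong) auto
  then show ?thesis by simp
qed

lemma rdiag_mv_axis: "rdiag d *v axis i 1 = complex_of_real (d i) *s axis i 1"
  by (simp add: vec_eq_iff rdiag_mv_nth axis_def)

lemma mv_axis_nth: "((A::complex^'n^'m) *v axis j 1) $ i = A $ i $ j"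
proof -
  have "(A *v axis j 1) $ i = (\<Sum>k\<in>UNIV. if k = j then A $ i $ j else 0)"
    unfolding matrix_vector_mult_def vec_lambda_beta by (rule sum.cong) (auto simp: axis_def)
  then show ?thesis by simp
qed

lemma cscale_mv: "cscale c A *v x = c *s (A *v x)"
  by (simp add: vec_eq_iff matrix_vector_mult_def sum_distrib_left mult.assoc)

lemma matrix_diff_rdistrib: "((A::complex^'n^'m) - B) ** C = A ** C - B ** C"
  by (simp add: vec_eq_iff matrix_matrix_mult_def sum_subtractf left_diff_distrib)

lemma matrix_diff_ldistrib: "(C::complex^'n^'m) ** (A - B) = C ** A - C ** B"
  by (simp add: vec_eq_iff matrix_matrix_mult_def sum_subtractf right_diff_distrib)

lemma matrix_vector_mult_uminus_left: "(- (A::complex^'n^'m)) *v x = - (A *v x)"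
  by (simp add: vec_eq_iff matrix_vector_mult_def sum_negf)

lemma matrix_vector_mult_uminus_right: "(A::complex^'n^'m) *v (- x) = - (A *v x)"
  by (simp add: vec_eq_iff matrix_vector_mult_def sum_negf)

lemma of_real_smult: "complex_of_real r *s (x::complex^'n) = r *\<^sub>R x"
  by (simp add: vec_eq_iff complex_eq_iff)

lemma cinner_add_left: "cinner (x + y) z = cinner x z + cinner y z"
  by (simp add: cinner_def sum.distrib distrib_right)

lemma cinner_add_right: "cinner x (y + z) = cinner x y + cinner x z"
  by (simp add: cinner_def sum.distrib distrib_left)

lemma cinner_diff_left: "cinner (x - y) z = cinner x z - cinner y z"
  by (simp add: cinner_def sum_subtractf left_diff_distrib)

lemma cinner_diff_right: "cinner x (y - z) = cinner x y - cinner x z"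
  by (simp add: cinner_def sum_subtractf right_diff_distrib)

lemma cinner_uminus_left: "cinner (- x) y = - cinner x y"
  by (simp add: cinner_def sum_negf)

lemma cinner_uminus_right: "cinner x (- y) = - cinner x y"
  by (simp add: cinner_def sum_negf)

lemma cinner_scale_left: "cinner (c *s x) y = cnj c * cinner x y"
  by (simp add: cinner_def sum_distrib_left mult_ac)

lemma cinner_scale_right: "cinner x (c *s y) = c * cinner x y"
  by (simp add: cinner_def sum_distrib_left mult_ac)

lemma cinner_zero_left [simp]: "cinner 0 x = 0"
  by (simp add: cinner_def)

lemma cinner_zero_right [simp]: "cinner x 0 = 0"
  by (simp add: cinner_def)

lemma cinner_sum_left: "cinner (\<Sum>j\<in>J. f j) x = (\<Sum>j\<in>J. cinner (f j) x)"
  unfolding cinner_def by (simp add: sum_distrib_right sum_component) (rule sum.swap)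

lemma cinner_sum_right: "cinner x (\<Sum>j\<in>J. f j) = (\<Sum>j\<in>J. cinner x (f j))"
  unfolding cinner_def by (simp add: sum_distrib_left sum_component) (rule sum.swap)

lemma cnj_cinner: "cnj (cinner x y) = cinner y x"
  by (simp add: cinner_def mult.commute)

lemma Re_cinner_commute: "Re (cinner x y) = Re (cinner y x)"
  by (metis cnj_cinner cnj.sel(1))

lemma cinner_adj: "cinner x (A *v y) = cinner (adj A *v x) y"
  unfolding cinner_def matrix_vector_mult_def
  by (simp add: sum_distrib_left sum_distrib_right mult_ac) (rule sum.swap)

lemma cinner_axis: "cinner (axis i 1) (axis j (1::complex)) = (if i = j then 1 else 0)"
proof -
  have "cinner (axis i 1) (axis j (1::complex)) = (\<Sum>k\<in>UNIV. if k = i then (if i = j then 1 else 0) else 0)"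
    unfolding cinner_def by (rule sum.cong) (auto simp: axis_def)
  then show ?thesis by simp
qed

lemma cinner_axis_mv_axis: "cinner (axis i 1) ((A::complex^'n^'n) *v axis j 1) = A $ i $ j"
proof -
  have "cinner (axis i 1) (A *v axis j 1) = (\<Sum>k\<in>UNIV. if k = i then A $ i $ j else 0)"
    unfolding cinner_def mv_axis_nth by (rule sum.cong) (auto simp: axis_def)
  then show ?thesis by simp
qed

lemma cinner_self: "cinner x x = complex_of_real ((norm x)^2)"
proof -
  have "cinner x x = (\<Sum>i\<in>UNIV. complex_of_real ((cmod (x $ i))^2))"
    unfolding cinner_def by (intro sum.cong refl) (metis complex_norm_square mult.commute)
  also have "\<dots> = complex_of_real ((norm x)^2)"
    by (simp add: norm_vec_def L2_set_def sum_nonneg)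
  finally show ?thesis .
qed

lemma cinner_self_eq_0: "cinner x x = 0 \<longleftrightarrow> x = 0"
  by (simp add: cinner_self)

lemma Re_cinner_self: "Re (cinner x x) = (norm x)^2"
  by (simp add: cinner_self)

lemma quadratic_form_eq_cinner:
  "(\<Sum>i\<in>UNIV. \<Sum>j\<in>UNIV. cnj (x $ i) * A $ i $ j * x $ j) = cinner x (A *v x)"
  unfolding cinner_def matrix_vector_mult_def by (simp add: sum_distrib_left mult_ac)

lemma continuous_on_quadratic_form: "continuous_on S (\<lambda>x. cinner x (A *v x))"
  unfolding quadratic_form_eq_cinner[symmetric] by (intro continuous_intros)

lemma quadratic_form_expand:
  "cinner (u + c *s v) (A *v (u + c *s v)) =
    cinner u (A *v u) + c * cinner u (A *v v) + cnj c * cinner v (A *v u) + cnj c * c * cinner v (A *v v)"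
proof -
  have "A *v (u + c *s v) = A *v u + c *s (A *v v)"
    by (simp only: matrix_vector_right_distrib vector_scalar_commute)
  then show ?thesis
    by (simp only: cinner_add_left cinner_add_right cinner_scale_left cinner_scale_right)
       (simp add: algebra_simps)
qed

lemma polarization:
  fixes A :: "complex^'n^'n"
  defines "Q \<equiv> \<lambda>z. cinner z (A *v z)"
  shows "cinner u (A *v v) =
    (Q (u + 1 *s v) - Q (u + (-1) *s v) - \<i> * (Q (u + \<i> *s v) - Q (u + (-\<i>) *s v))) / 4"
  unfolding Q_def quadratic_form_expand by (simp add: algebra_simps)

lemma psd_iff: "psd A \<longleftrightarrow> hermitian A \<and> (\<forall>x. 0 \<le> Re (cinner x (A *v x)))"
  by (simp add: psd_def quadratic_form_eq_cinner)

lemma hermitian_cinner: "hermitian A \<Longrightarrow> cinner x (A *v y) = cinner (A *v x) y"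
  by (simp add: hermitian_def cinner_adj)

lemma hermitian_quadratic_form_real:
  assumes "hermitian A"
  shows "cinner x (A *v x) = complex_of_real (Re (cinner x (A *v x)))"
proof -
  have "cnj (cinner x (A *v x)) = cinner x (A *v x)"
    by (simp add: cnj_cinner hermitian_cinner[OF assms])
  then show ?thesis by (simp add: complex_eq_iff)
qed

lemma hermitian_add: "hermitian A \<Longrightarrow> hermitian B \<Longrightarrow> hermitian (A + B)"
  by (simp add: hermitian_def adj_add)

lemma hermitian_diff: "hermitian A \<Longrightarrow> hermitian B \<Longrightarrow> hermitian (A - B)"
  by (simp add: hermitian_def adj_diff)

lemma hermitian_uminus: "hermitian A \<Longrightarrow> hermitian (- A)"
  by (simp add: hermitian_def adj_uminus)

lemma hermitian_adj_mult_self: "hermitian (adj A ** A)"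
  by (simp add: hermitian_def adj_mult)

lemma hermitian_congruence: "hermitian K \<Longrightarrow> hermitian P \<Longrightarrow> hermitian (K ** P ** K)"
  by (simp add: hermitian_def adj_mult matrix_mul_assoc)

lemma hermitian_unitary_diag: "hermitian (U ** rdiag d ** adj U)"
  by (simp add: hermitian_def adj_mult matrix_mul_assoc)

lemma unitary_mult_adj: "unitary U \<Longrightarrow> U ** adj U = mat 1"
  unfolding unitary_def using matrix_left_right_inverse by blast

lemma unitary_cancel_left: "unitary U \<Longrightarrow> X ** adj U ** U = X"
  by (metis matrix_mul_assoc matrix_mul_rid unitary_def)

lemma unitary_cancel_right: "unitary U \<Longrightarrow> X ** U ** adj U = X"
  by (metis matrix_mul_assoc matrix_mul_rid unitary_mult_adj)

lemma unitary_adj_mv: "unitary U \<Longrightarrow> adj U *v (U *v x) = x"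
  by (simp add: matrix_vector_mul_assoc unitary_def)

lemma unitary_cinner: "unitary U \<Longrightarrow> cinner (U *v x) (U *v y) = cinner x y"
  by (simp add: cinner_adj unitary_adj_mv)

section \<open>Spectral theorem for Hermitian matrices\<close>

lemma linear_coeff_zero_if_quadratic_nonpos:
  fixes a c :: real
  assumes "\<And>t. 2 * t * a + t^2 * c \<le> 0"
  shows "a = 0"
proof (rule ccontr)
  assume "a \<noteq> 0"
  define u where "u = \<bar>c\<bar> + 1"
  have "u > 0" "2 * u + c > 0"
    unfolding u_def by auto
  with \<open>a \<noteq> 0\<close> have "a^2 * (2 * u + c) / u^2 > 0"
    by simp
  moreover have "2 * (a / u) * a + (a / u)^2 * c = a^2 * (2 * u + c) / u^2"
    using \<open>u > 0\<close> by (simp add: field_simps power2_eq_square)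
  ultimately show False
    using assms[of "a / u"] by linarith
qed

lemma vec_subspace_imp_subspace: "vec.subspace W \<Longrightarrow> subspace (W :: (complex^'n) set)"
  unfolding subspace_def by (metis vec.subspace_def of_real_smult)

text \<open>Otherwise moving from \<open>v\<close> along \<open>w\<close> or \<open>\<i> w\<close> would increase the Rayleigh quotient to
  first order.\<close>
lemma rayleigh_maximizer_orthogonal:
  fixes A :: "complex^'n^'n"
  assumes herm: "hermitian A" and W: "vec.subspace W" and v: "v \<in> W" "norm v = 1"
    and max: "\<And>y. y \<in> W \<Longrightarrow> Re (cinner y (A *v y)) \<le> Re (cinner v (A *v v)) * (norm y)^2"
    and w: "w \<in> W" "cinner v w = 0"
  shows "cinner w (A *v v) = 0"
proof -
  have Re_zero: "Re (cinner w' (A *v v)) = 0" if w': "w' \<in> W" "cinner v w' = 0" for w'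
  proof (rule linear_coeff_zero_if_quadratic_nonpos)
    fix t :: real
    define y where "y = v + complex_of_real t *s w'"
    have "cinner w' v = 0"
      using w' cnj_cinner[of v w'] by simp
    then have "cinner y y = 1 + complex_of_real (t * t) * cinner w' w'"
      using w' v by (simp add: y_def cinner_add_left cinner_add_right cinner_scale_left
          cinner_scale_right cinner_self[of v])
    then have "Re (cinner y y) = 1 + t^2 * Re (cinner w' w')"
      by (simp add: power2_eq_square)
    then have "(norm y)^2 = 1 + t^2 * (norm w')^2"
      by (simp only: Re_cinner_self)
    moreover have "cinner v (A *v w') = cnj (cinner w' (A *v v))"
      by (simp add: hermitian_cinner[OF herm] cnj_cinner)
    then have "Re (cinner y (A *v y)) = Re (cinner v (A *v v)) + 2 * t * Re (cinner w' (A *v v))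
        + t^2 * Re (cinner w' (A *v w'))"
      by (simp add: y_def quadratic_form_expand power2_eq_square)
    moreover have "y \<in> W"
      unfolding y_def using W v w' by (simp add: vec.subspace_add vec.subspace_scale)
    ultimately show "2 * t * Re (cinner w' (A *v v))
        + t^2 * (Re (cinner w' (A *v w')) - Re (cinner v (A *v v)) * (norm w')^2) \<le> 0"
      using max[of y] by (simp add: algebra_simps)
  qed
  have "Re (cinner (\<i> *s w) (A *v v)) = 0"
    using w W by (intro Re_zero) (simp_all add: vec.subspace_scale cinner_scale_right)
  then have "Im (cinner w (A *v v)) = 0"
    by (simp add: cinner_scale_left)
  with Re_zero[OF w] show ?thesis
    by (simp add: complex_eq_iff)
qed

lemma rayleigh_maximizer_eigenvector:
  fixes A :: "complex^'n^'n"
  assumes herm: "hermitian A" and W: "vec.subspace W" and inv: "\<And>x. x \<in> W \<Longrightarrow> A *v x \<in> W"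
    and v: "v \<in> W" "norm v = 1"
    and max: "\<And>y. y \<in> W \<Longrightarrow> Re (cinner y (A *v y)) \<le> Re (cinner v (A *v v)) * (norm y)^2"
  shows "A *v v = complex_of_real (Re (cinner v (A *v v))) *s v"
proof -
  define z where "z = A *v v - complex_of_real (Re (cinner v (A *v v))) *s v"
  have "z \<in> W"
    unfolding z_def using W v inv by (simp add: vec.subspace_diff vec.subspace_scale)
  have vv: "cinner v v = 1"
    using v by (simp add: cinner_self)
  have "cinner v z = 0"
    unfolding z_def using hermitian_quadratic_form_real[OF herm, of v]
    by (simp add: cinner_diff_right cinner_scale_right vv)
  then have "cinner z v = 0" and "cinner z (A *v v) = 0"
    using cnj_cinner[of v z] rayleigh_maximizer_orthogonal[OF herm W v max \<open>z \<in> W\<close>] by simp_all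
  have "cinner z z = cinner z (A *v v - complex_of_real (Re (cinner v (A *v v))) *s v)"
    by (simp only: z_def[symmetric])
  also have "\<dots> = 0"
    using \<open>cinner z v = 0\<close> \<open>cinner z (A *v v) = 0\<close>
    by (simp only: cinner_diff_right cinner_scale_right) simp
  finally have "cinner z z = 0" .
  then show ?thesis
    by (simp add: cinner_self_eq_0 z_def)
qed

lemma hermitian_eigenvector_in_subspace:
  fixes A :: "complex^'n^'n"
  assumes herm: "hermitian A" and W: "vec.subspace W" and inv: "\<And>x. x \<in> W \<Longrightarrow> A *v x \<in> W"
    and x: "x \<in> W" "x \<noteq> 0"
  obtains v l where "v \<in> W" "norm v = 1" "A *v v = complex_of_real l *s v"
proof -
  have normalize: "(1 / norm y) *\<^sub>R y \<in> W \<inter> sphere 0 1" if "y \<in> W" "y \<noteq> 0" for y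
  proof -
    have "(1 / norm y) *\<^sub>R y \<in> W"
      using vec.subspace_scale[OF W that(1), of "complex_of_real (1 / norm y)"]
      unfolding of_real_smult .
    then show ?thesis
      using that(2) by simp
  qed
  have "compact (W \<inter> sphere 0 1)"
    using closed_subspace[OF vec_subspace_imp_subspace[OF W]]
    by (metis Int_commute compact_Int_closed compact_sphere)
  moreover have "W \<inter> sphere 0 1 \<noteq> {}"
    using normalize[OF x] by blast
  moreover have "continuous_on (W \<inter> sphere 0 1) (\<lambda>x. Re (cinner x (A *v x)))"
    by (intro continuous_intros continuous_on_quadratic_form)
  ultimately have "\<exists>v\<in>W \<inter> sphere 0 1. \<forall>y\<in>W \<inter> sphere 0 1. Re (cinner y (A *v y)) \<le> Re (cinner v (A *v v))"
    by (rule continuous_attains_sup)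
  then obtain v where v: "v \<in> W \<inter> sphere 0 1"
    and vmax: "\<And>y. y \<in> W \<inter> sphere 0 1 \<Longrightarrow> Re (cinner y (A *v y)) \<le> Re (cinner v (A *v v))"
    by blast
  have "Re (cinner y (A *v y)) \<le> Re (cinner v (A *v v)) * (norm y)^2" if "y \<in> W" for y
  proof (cases "y = 0")
    case False
    have "Re (cinner y (A *v y)) / (norm y)^2 = Re (cinner ((1 / norm y) *\<^sub>R y) (A *v ((1 / norm y) *\<^sub>R y)))"
      unfolding of_real_smult[symmetric]
      by (simp add: vector_scalar_commute cinner_scale_left cinner_scale_right power2_eq_square)
    also have "\<dots> \<le> Re (cinner v (A *v v))"
      by (rule vmax[OF normalize[OF that False]])
    finally show ?thesis
      using False by (simp add: divide_le_eq)
  qed simp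
  then have "A *v v = complex_of_real (Re (cinner v (A *v v))) *s v"
    using v by (intro rayleigh_maximizer_eigenvector[OF herm W inv]) auto
  then show ?thesis
    using v by (intro that[of v]) auto
qed

definition orthonormal :: "(complex^'n) set \<Rightarrow> bool" where
  "orthonormal S \<longleftrightarrow> (\<forall>s\<in>S. cinner s s = 1) \<and> (\<forall>s\<in>S. \<forall>t\<in>S. s \<noteq> t \<longrightarrow> cinner s t = 0)"

definition orthogonal_complement :: "(complex^'n) set \<Rightarrow> (complex^'n) set" where
  "orthogonal_complement S = {x. \<forall>s\<in>S. cinner s x = 0}"

lemma subspace_orthogonal_complement: "vec.subspace (orthogonal_complement S)"
  by (simp add: vec.subspace_def orthogonal_complement_def cinner_add_right cinner_scale_right)

lemma orthogonal_complement_invariant: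
  assumes "hermitian A" and "\<forall>s\<in>S. \<exists>l::real. A *v s = complex_of_real l *s s"
    and "x \<in> orthogonal_complement S"
  shows "A *v x \<in> orthogonal_complement S"
  using assms by (fastforce simp: orthogonal_complement_def hermitian_cinner cinner_scale_left)

lemma orthogonal_complement_nontrivial:
  fixes S :: "(complex^'n) set"
  assumes fin: "finite S" and on: "orthonormal S" and card: "card S < CARD('n)"
  obtains x where "x \<in> orthogonal_complement S" "x \<noteq> 0"
proof -
  have "vec.span S \<noteq> UNIV"
  proof
    assume "vec.span S = UNIV"
    then have "vec.dim (UNIV :: (complex^'n) set) \<le> card S"
      using fin by (intro vec.dim_le_card) auto
    then show False
      using card by (simp add: card_cart_basis)
  qed
  then obtain y where y: "y \<notin> vec.span S"
    by blast
  define x where "x = y - (\<Sum>s\<in>S. cinner s y *s s)"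
  have "cinner t x = 0" if "t \<in> S" for t
  proof -
    have "cinner t (\<Sum>s\<in>S. cinner s y *s s) = (\<Sum>s\<in>S. if s = t then cinner t y else 0)"
      unfolding cinner_sum_right cinner_scale_right
      using on that by (intro sum.cong) (auto simp: orthonormal_def)
    then show ?thesis
      using fin that by (simp add: x_def cinner_diff_right)
  qed
  moreover have "(\<Sum>s\<in>S. cinner s y *s s) \<in> vec.span S"
    by (intro vec.span_sum vec.span_scale vec.span_base)
  then have "x \<noteq> 0"
    using y by (auto simp: x_def)
  ultimately show ?thesis
    using that by (auto simp: orthogonal_complement_def)
qed

lemma orthonormal_eigenvectors:
  fixes A :: "complex^'n^'n"
  assumes herm: "hermitian A" and "k \<le> CARD('n)"
  shows "\<exists>S. finite S \<and> card S = k \<and> orthonormal S \<and> (\<forall>s\<in>S. \<exists>l::real. A *v s = complex_of_real l *s s)"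
  using \<open>k \<le> CARD('n)\<close>
proof (induction k)
  case 0
  show ?case
    by (rule exI[of _ "{}"]) (simp add: orthonormal_def)
next
  case (Suc k)
  then obtain S where fin: "finite S" and card: "card S = k" and on: "orthonormal S"
    and eig: "\<forall>s\<in>S. \<exists>l::real. A *v s = complex_of_real l *s s"
    by auto
  obtain x where "x \<in> orthogonal_complement S" "x \<noteq> 0"
    using orthogonal_complement_nontrivial[OF fin on] Suc.prems card by auto
  then obtain v l where v: "v \<in> orthogonal_complement S" "norm v = 1"
    and vl: "A *v v = complex_of_real l *s v"
    using hermitian_eigenvector_in_subspace[OF herm subspace_orthogonal_complement
        orthogonal_complement_invariant[OF herm eig]] by blast
  have vv: "cinner v v = 1"
    using v by (simp add: cinner_self)
  have orth: "cinner s v = 0" "cinner v s = 0" if "s \<in> S" for s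
    using v that cnj_cinner[of s v] by (auto simp: orthogonal_complement_def)
  then have "v \<notin> S"
    using vv by force
  moreover have "orthonormal (insert v S)"
    using on vv orth by (auto simp: orthonormal_def)
  ultimately show ?case
    using fin card eig vl by (intro exI[of _ "insert v S"]) auto
qed

theorem hermitian_unitary_diagonalization:
  fixes A :: "complex^'n^'n"
  assumes herm: "hermitian A"
  obtains U d where "unitary U" "A = U ** rdiag d ** adj U"
proof -
  obtain S where fin: "finite S" and card: "card S = CARD('n)" and on: "orthonormal S"
    and eig: "\<forall>s\<in>S. \<exists>l::real. A *v s = complex_of_real l *s s"
    using orthonormal_eigenvectors[OF herm, of "CARD('n)"] by auto
  obtain b where b: "bij_betw b (UNIV :: 'n set) S"
    using finite_same_card_bij[of "UNIV :: 'n set" S] fin card by auto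
  then have bS: "b j \<in> S" and b_eq: "b i = b j \<longleftrightarrow> i = j" for i j
    by (auto simp: bij_betw_def inj_on_def)
  have "\<forall>j. \<exists>l. A *v b j = complex_of_real l *s b j"
    using eig bS by blast
  then obtain d where d: "\<And>j. A *v b j = complex_of_real (d j) *s b j"
    by metis
  define U :: "complex^'n^'n" where "U = (\<chi> i j. b j $ i)"
  have "(adj U ** U) $ i $ j = cinner (b i) (b j)" for i j
    by (simp add: U_def matrix_matrix_mult_def cinner_def)
  moreover have "cinner (b i) (b j) = (if i = j then 1 else 0)" for i j
    using on bS b_eq by (auto simp: orthonormal_def)
  ultimately have unitary: "unitary U"
    by (simp add: unitary_def vec_eq_iff mat_def)
  have "(A ** U) $ i $ j = (A *v b j) $ i" for i j
    by (simp add: U_def matrix_matrix_mult_def matrix_vector_mult_def)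
  then have "A ** U = U ** rdiag d"
    by (simp add: vec_eq_iff d matrix_mul_rdiag_nth U_def mult.commute)
  then have "A = U ** rdiag d ** adj U"
    by (metis matrix_mul_assoc matrix_mul_rid unitary_mult_adj[OF unitary])
  with unitary that show ?thesis
    by blast
qed

section \<open>Functional calculus\<close>

lemma unitary_diag_map_eq:
  assumes U: "unitary U" and V: "unitary V"
    and eq: "U ** rdiag d ** adj U = V ** rdiag e ** adj V"
  shows "U ** rdiag (f \<circ> d) ** adj U = V ** rdiag (f \<circ> e) ** adj V"
proof -
  define W where "W = adj V ** U"
  have "W ** rdiag d = adj V ** (U ** rdiag d ** adj U) ** U"
    using U by (simp add: W_def matrix_mul_assoc unitary_cancel_left)
  also have "\<dots> = rdiag e ** W"
    using V by (simp add: eq W_def matrix_mul_assoc unitary_def)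
  finally have "W $ i $ j * d j = e i * W $ i $ j" for i j
    by (metis matrix_mul_rdiag_nth rdiag_matrix_mul_nth)
  then have "W $ i $ j * f (d j) = f (e i) * W $ i $ j" for i j
    by (metis mult.commute mult_cancel_left of_real_eq_iff)
  then have WF: "W ** rdiag (f \<circ> d) = rdiag (f \<circ> e) ** W"
    by (simp add: vec_eq_iff matrix_mul_rdiag_nth rdiag_matrix_mul_nth)
  have "U ** rdiag (f \<circ> d) ** adj U = V ** (W ** rdiag (f \<circ> d)) ** adj U"
    using V by (simp add: W_def matrix_mul_assoc unitary_mult_adj)
  also have "\<dots> = V ** rdiag (f \<circ> e) ** (W ** adj U)"
    by (simp add: WF matrix_mul_assoc)
  also have "W ** adj U = adj V"
    using U by (simp add: W_def unitary_cancel_right)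
  finally show ?thesis .
qed

lemma mfun_eq:
  assumes U: "unitary U" and A: "A = U ** rdiag d ** adj U"
  shows "mfun f A = U ** rdiag (f \<circ> d) ** adj U"
proof -
  let ?P = "\<lambda>B. \<exists>U d. unitary U \<and> A = U ** rdiag d ** adj U \<and> B = U ** rdiag (f \<circ> d) ** adj U"
  have "?P (U ** rdiag (f \<circ> d) ** adj U)"
    using U A by blast
  then have "?P (mfun f A)"
    unfolding mfun_def by (rule someI)
  then obtain V e where V: "unitary V" and "A = V ** rdiag e ** adj V"
    and "mfun f A = V ** rdiag (f \<circ> e) ** adj V"
    by blast
  then show ?thesis
    using unitary_diag_map_eq[OF V U, of e d f] A by simp
qed

lemma hermitian_mfun: "hermitian A \<Longrightarrow> hermitian (mfun f A)"
  by (metis hermitian_unitary_diag hermitian_unitary_diagonalization mfun_eq)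

lemma mfun_comp:
  assumes "hermitian A"
  shows "mfun g (mfun f A) = mfun (g \<circ> f) A"
proof -
  obtain U d where U: "unitary U" and A: "A = U ** rdiag d ** adj U"
    using hermitian_unitary_diagonalization[OF assms] .
  show ?thesis
    using mfun_eq[OF U mfun_eq[OF U A]] mfun_eq[OF U A, of "g \<circ> f"] by (simp add: comp_assoc)
qed

lemma unitary_diag_mult:
  assumes "unitary U"
  shows "(U ** rdiag a ** adj U) ** (U ** rdiag b ** adj U) = U ** rdiag (\<lambda>i. a i * b i) ** adj U"
  using assms by (simp add: matrix_mul_assoc unitary_cancel_left flip: rdiag_mult)

lemma unitary_diag_diff:
  "U ** rdiag a ** adj U - U ** rdiag b ** adj U = U ** rdiag (\<lambda>i. a i - b i) ** adj U"
  by (metis rdiag_diff matrix_diff_ldistrib matrix_diff_rdistrib)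

lemma mfun_mult:
  assumes "hermitian A"
  shows "mfun f A ** mfun g A = mfun (\<lambda>t. f t * g t) A"
proof -
  obtain U d where U: "unitary U" and A: "A = U ** rdiag d ** adj U"
    using hermitian_unitary_diagonalization[OF assms] .
  show ?thesis
    unfolding mfun_eq[OF U A] unitary_diag_mult[OF U] by (simp add: comp_def)
qed

lemma mfun_id:
  assumes "hermitian A"
  shows "mfun (\<lambda>t. t) A = A"
proof -
  obtain U d where U: "unitary U" and A: "A = U ** rdiag d ** adj U"
    using hermitian_unitary_diagonalization[OF assms] .
  show ?thesis
    using mfun_eq[OF U A, of "\<lambda>t. t"] A by (simp add: comp_def)
qed

lemma unitary_diag_quadratic_form:
  assumes "unitary U"
  shows "cinner x ((U ** rdiag d ** adj U) *v x) =
    complex_of_real (\<Sum>i\<in>UNIV. d i * (cmod ((adj U *v x) $ i))^2)"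
proof -
  define y where "y = adj U *v x"
  have "(U ** rdiag d ** adj U) *v x = U *v (rdiag d *v y)"
    by (simp add: y_def matrix_vector_mul_assoc matrix_mul_assoc)
  then have "cinner x ((U ** rdiag d ** adj U) *v x) = cinner y (rdiag d *v y)"
    by (simp only: cinner_adj[of x U] y_def)
  also have "\<dots> = (\<Sum>i\<in>UNIV. complex_of_real (d i * (cmod (y $ i))^2))"
    unfolding cinner_def rdiag_mv_nth
    by (intro sum.cong refl) (simp add: complex_norm_square[symmetric] mult.commute mult.left_commute)
  finally show ?thesis
    by (simp add: y_def)
qed

lemma unitary_diag_mv_column:
  assumes "unitary U"
  shows "(U ** rdiag d ** adj U) *v (U *v axis i 1) = complex_of_real (d i) *s (U *v axis i 1)"
  using assms
  by (simp add: matrix_vector_mul_assoc[symmetric] unitary_adj_mv rdiag_mv_axis vector_scalar_commute)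

lemma psd_unitary_diag_iff:
  assumes U: "unitary U"
  shows "psd (U ** rdiag d ** adj U) \<longleftrightarrow> (\<forall>i. d i \<ge> 0)"
proof
  assume psd: "psd (U ** rdiag d ** adj U)"
  show "\<forall>i. d i \<ge> 0"
  proof
    fix i
    have "cinner (U *v axis i 1) ((U ** rdiag d ** adj U) *v (U *v axis i 1)) = complex_of_real (d i)"
      by (simp add: unitary_diag_mv_column[OF U] cinner_scale_right unitary_cinner[OF U] cinner_axis)
    then show "d i \<ge> 0"
      using psd unfolding psd_iff by (metis Re_complex_of_real)
  qed
next
  assume "\<forall>i. d i \<ge> 0"
  then show "psd (U ** rdiag d ** adj U)"
    by (auto simp: psd_iff hermitian_unitary_diag unitary_diag_quadratic_form[OF U] intro!: sum_nonneg)
qed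

lemma psd_eigenvalues_nonneg:
  assumes "psd A" "unitary U" "A = U ** rdiag d ** adj U"
  shows "d i \<ge> 0"
  using assms psd_unitary_diag_iff by blast

lemma psd_unitary_diagonalization:
  assumes "psd A"
  obtains U d where "unitary U" "A = U ** rdiag d ** adj U" "\<And>i. d i \<ge> 0"
  by (metis assms hermitian_unitary_diagonalization psd_eigenvalues_nonneg psd_iff)

lemma mfun_cong_psd:
  assumes "psd A" and "\<And>t. t \<ge> 0 \<Longrightarrow> f t = g t"
  shows "mfun f A = mfun g A"
proof -
  obtain U d where U: "unitary U" and A: "A = U ** rdiag d ** adj U" and "\<And>i. d i \<ge> 0"
    using psd_unitary_diagonalization[OF assms(1)] by blast
  then have "f \<circ> d = g \<circ> d"
    using assms(2) by (auto simp: fun_eq_iff)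
  then show ?thesis
    by (simp add: mfun_eq[OF U A])
qed

lemma psd_mfun:
  assumes "hermitian A" and "\<And>t. f t \<ge> 0"
  shows "psd (mfun f A)"
proof -
  obtain U d where U: "unitary U" and A: "A = U ** rdiag d ** adj U"
    using hermitian_unitary_diagonalization[OF assms(1)] .
  show ?thesis
    unfolding mfun_eq[OF U A] psd_unitary_diag_iff[OF U] using assms(2) by simp
qed

lemma psd_mfun_nonneg:
  assumes "psd A" and "\<And>t. t \<ge> 0 \<Longrightarrow> f t \<ge> 0"
  shows "psd (mfun f A)"
proof -
  obtain U d where U: "unitary U" and A: "A = U ** rdiag d ** adj U" and "\<And>i. d i \<ge> 0"
    using psd_unitary_diagonalization[OF assms(1)] by blast
  then show ?thesis
    unfolding mfun_eq[OF U A] psd_unitary_diag_iff[OF U] using assms(2) by simp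
qed

lemma mfun_sqrt_square:
  assumes "psd A"
  shows "mfun sqrt A ** mfun sqrt A = A"
proof -
  have herm: "hermitian A"
    using assms by (simp add: psd_iff)
  have "mfun sqrt A ** mfun sqrt A = mfun (\<lambda>t. sqrt t * sqrt t) A"
    by (rule mfun_mult[OF herm])
  also have "\<dots> = mfun (\<lambda>t. t) A"
    by (rule mfun_cong_psd[OF assms]) simp
  finally show ?thesis
    by (simp add: mfun_id[OF herm])
qed

lemma mfun_power2_sqrt:
  assumes "psd A"
  shows "mfun (\<lambda>t. (sqrt t)^2) A = A"
proof -
  have "mfun (\<lambda>t. (sqrt t)^2) A = mfun (\<lambda>t. t) A"
    by (rule mfun_cong_psd[OF assms]) simp
  then show ?thesis
    using assms by (simp add: mfun_id psd_iff)
qed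

lemma mfun_eigenvector:
  assumes "hermitian A" and u: "A *v u = complex_of_real l *s u"
  shows "mfun f A *v u = complex_of_real (f l) *s u"
proof -
  obtain U d where U: "unitary U" and A: "A = U ** rdiag d ** adj U"
    using hermitian_unitary_diagonalization[OF assms(1)] .
  define y where "y = adj U *v u"
  have "rdiag d *v y = adj U *v (A *v u)"
    using U by (simp add: A y_def matrix_vector_mul_assoc[symmetric] unitary_adj_mv)
  also have "\<dots> = complex_of_real l *s y"
    by (simp add: u y_def vector_scalar_commute)
  finally have dl: "d i = l \<or> y $ i = 0" for i
    by (auto simp: vec_eq_iff rdiag_mv_nth)
  have "rdiag (f \<circ> d) *v y = complex_of_real (f l) *s y"
    unfolding vec_eq_iff rdiag_mv_nth using dl by (metis comp_apply mult_zero_right vector_smult_component)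
  moreover have "U *v y = u"
    using U by (simp add: y_def matrix_vector_mul_assoc unitary_mult_adj)
  moreover have "mfun f A *v u = U *v (rdiag (f \<circ> d) *v y)"
    by (simp add: mfun_eq[OF U A] y_def matrix_vector_mul_assoc matrix_mul_assoc)
  ultimately show ?thesis
    by (simp add: vector_scalar_commute)
qed

section \<open>Positive semidefinite matrices and the Loewner order\<close>

lemma psd_add: "psd A \<Longrightarrow> psd B \<Longrightarrow> psd (A + B)"
  by (simp add: psd_iff hermitian_add matrix_vector_mult_add_rdistrib cinner_add_right)

lemma loewner_le_iff_forms:
  assumes "hermitian A" "hermitian B"
  shows "loewner_le A B \<longleftrightarrow> (\<forall>x. Re (cinner x (A *v x)) \<le> Re (cinner x (B *v x)))"
  using assms
  by (simp add: loewner_le_def psd_iff hermitian_diff matrix_vector_mult_diff_rdistrib cinner_diff_right)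

lemma loewner_le_hermitian: "loewner_le A B \<Longrightarrow> hermitian A \<Longrightarrow> hermitian B"
  unfolding loewner_le_def psd_iff by (metis diff_add_cancel hermitian_add)

lemma loewner_le_form: "loewner_le A B \<Longrightarrow> Re (cinner x (A *v x)) \<le> Re (cinner x (B *v x))"
  by (simp add: loewner_le_def psd_iff matrix_vector_mult_diff_rdistrib cinner_diff_right)

lemma loewner_trans: "loewner_le A B \<Longrightarrow> loewner_le B C \<Longrightarrow> loewner_le A C"
  unfolding loewner_le_def using psd_add[of "C - B" "B - A"] by simp

lemma psd_congruence:
  assumes "hermitian K" and "psd P"
  shows "psd (K ** P ** K)"
proof -
  have "cinner x ((K ** P ** K) *v x) = cinner (K *v x) (P *v (K *v x))" for x
    by (simp add: matrix_vector_mul_assoc[symmetric] hermitian_cinner[OF assms(1)])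
  then show ?thesis
    using assms by (simp add: psd_iff hermitian_congruence)
qed

lemma loewner_congruence:
  assumes "hermitian K" and "loewner_le P Q"
  shows "loewner_le (K ** P ** K) (K ** Q ** K)"
proof -
  have "K ** Q ** K - K ** P ** K = K ** (Q - P) ** K"
    by (simp add: matrix_diff_ldistrib matrix_diff_rdistrib)
  then show ?thesis
    using assms psd_congruence by (simp add: loewner_le_def)
qed

lemma psd_adj_mult_self: "psd (adj A ** A)"
proof -
  have "cinner x ((adj A ** A) *v x) = cinner (A *v x) (A *v x)" for x
    by (simp add: matrix_vector_mul_assoc[symmetric] cinner_adj[of x "adj A"])
  then show ?thesis
    by (simp add: psd_iff hermitian_adj_mult_self Re_cinner_self)
qed

lemma psd_mabs: "psd (mabs A)"
  unfolding mabs_def by (rule psd_mfun_nonneg[OF psd_adj_mult_self]) simp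

lemma hermitian_mabs: "hermitian (mabs A)"
  using psd_mabs psd_iff by blast

text \<open>An eigenvector \<open>v\<close> of \<open>P - Q\<close> for an eigenvalue \<open>c > 0\<close> gives
  \<open>\<langle>v, (P\<^sup>2 - Q\<^sup>2) v\<rangle> = c (\<langle>v, P v\<rangle> + \<langle>v, Q v\<rangle>)\<close>, which can only be \<open>\<le> 0\<close> if both forms vanish,
  contradicting \<open>\<langle>v, (P - Q) v\<rangle> = c\<close>.\<close>
lemma loewner_le_of_square_le:
  assumes psd_P: "psd P" and psd_Q: "psd Q" and le: "loewner_le (P ** P) (Q ** Q)"
  shows "loewner_le P Q"
proof (rule ccontr)
  assume "\<not> loewner_le P Q"
  have herm: "hermitian (P - Q)"
    using psd_P psd_Q by (simp add: psd_iff hermitian_diff)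
  obtain U c where U: "unitary U" and D: "P - Q = U ** rdiag c ** adj U"
    using hermitian_unitary_diagonalization[OF herm] .
  have "rdiag (\<lambda>i. 0) = (0 :: complex^'a^'a)"
    by (simp add: vec_eq_iff)
  then have "Q - P = U ** rdiag (\<lambda>i. 0) ** adj U - U ** rdiag c ** adj U"
    by (simp add: D[symmetric])
  then have "Q - P = U ** rdiag (\<lambda>i. - c i) ** adj U"
    by (simp add: unitary_diag_diff)
  then obtain i where ci: "c i > 0"
    using \<open>\<not> loewner_le P Q\<close> psd_unitary_diag_iff[OF U] unfolding loewner_le_def
    by (metis neg_0_le_iff_le not_le)
  define v where "v = U *v axis i 1"
  have Dv: "(P - Q) *v v = complex_of_real (c i) *s v"
    unfolding D v_def by (rule unitary_diag_mv_column[OF U])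
  have "P ** P - Q ** Q = (P - Q) ** P + Q ** (P - Q)"
    by (simp add: matrix_diff_ldistrib matrix_diff_rdistrib)
  then have "cinner v ((P ** P - Q ** Q) *v v) = cinner ((P - Q) *v v) (P *v v) + cinner v (Q *v ((P - Q) *v v))"
    by (simp add: matrix_vector_mult_add_rdistrib cinner_add_right matrix_vector_mul_assoc[symmetric]
        hermitian_cinner[OF herm])
  also have "\<dots> = complex_of_real (c i) * (cinner v (P *v v) + cinner v (Q *v v))"
    by (simp add: Dv cinner_scale_left cinner_scale_right vector_scalar_commute distrib_left)
  finally have "Re (cinner v ((P ** P - Q ** Q) *v v)) = c i * (Re (cinner v (P *v v)) + Re (cinner v (Q *v v)))"
    by simp
  moreover have "Re (cinner v ((P ** P - Q ** Q) *v v)) \<le> 0"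
    using loewner_le_form[OF le, of v] by (simp add: matrix_vector_mult_diff_rdistrib cinner_diff_right)
  moreover have "Re (cinner v (P *v v)) \<ge> 0" "Re (cinner v (Q *v v)) \<ge> 0"
    using psd_P psd_Q by (auto simp: psd_iff)
  moreover have "cinner v v = 1"
    by (simp add: v_def unitary_cinner[OF U] cinner_axis)
  then have "Re (cinner v ((P - Q) *v v)) = c i"
    by (simp add: Dv cinner_scale_right)
  then have "Re (cinner v (P *v v)) - Re (cinner v (Q *v v)) = c i"
    by (simp add: matrix_vector_mult_diff_rdistrib cinner_diff_right)
  ultimately show False
    using ci by (simp add: mult_le_0_iff)
qed

section \<open>The mixed Schwarz inequality\<close>

lemma cmod_sum_mult_square_le:
  fixes a b :: "'j \<Rightarrow> complex"
  shows "(cmod (\<Sum>j\<in>J. a j * b j))^2 \<le> (\<Sum>j\<in>J. (cmod (a j))^2) * (\<Sum>j\<in>J. (cmod (b j))^2)"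
proof -
  have "cmod (\<Sum>j\<in>J. a j * b j) \<le> (\<Sum>j\<in>J. cmod (a j) * cmod (b j))"
    by (metis (no_types, lifting) norm_mult norm_sum sum.cong)
  then have "(cmod (\<Sum>j\<in>J. a j * b j))^2 \<le> (\<Sum>j\<in>J. cmod (a j) * cmod (b j))^2"
    by (simp add: power_mono)
  also have "\<dots> \<le> (\<Sum>j\<in>J. (cmod (a j))^2) * (\<Sum>j\<in>J. (cmod (b j))^2)"
    by (rule Cauchy_Schwarz_ineq_sum)
  finally show ?thesis .
qed

lemma bessel_inequality:
  fixes u :: "'j \<Rightarrow> complex^'n"
  assumes "finite J"
    and orthonormal: "\<And>i j. i \<in> J \<Longrightarrow> j \<in> J \<Longrightarrow> cinner (u i) (u j) = (if i = j then 1 else 0)"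
  shows "(\<Sum>j\<in>J. (cmod (cinner (u j) z))^2) \<le> (norm z)^2"
proof -
  define a where "a j = cinner (u j) z" for j
  define B where "B = (\<Sum>j\<in>J. (cmod (a j))^2)"
  define p where "p = (\<Sum>j\<in>J. a j *s u j)"
  have sum_a: "(\<Sum>j\<in>J. cnj (a j) * a j) = complex_of_real B"
    unfolding B_def of_real_sum by (intro sum.cong refl) (metis complex_norm_square mult.commute)
  have pz: "cinner p z = complex_of_real B"
    by (simp add: p_def cinner_sum_left cinner_scale_left a_def[symmetric] sum_a)
  have "cinner (u i) p = a i" if "i \<in> J" for i
  proof -
    have "cinner (u i) p = (\<Sum>j\<in>J. if j = i then a i else 0)"
      unfolding p_def cinner_sum_right cinner_scale_right
      using that orthonormal by (intro sum.cong) auto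
    then show ?thesis
      using assms(1) that by simp
  qed
  moreover have "cinner (\<Sum>j\<in>J. a j *s u j) p = (\<Sum>i\<in>J. cnj (a i) * cinner (u i) p)"
    by (simp add: cinner_sum_left cinner_scale_left)
  then have "cinner p p = (\<Sum>i\<in>J. cnj (a i) * cinner (u i) p)"
    by (simp only: p_def[symmetric])
  ultimately have pp: "cinner p p = complex_of_real B"
    by (simp add: sum_a)
  have "0 \<le> Re (cinner (z - p) (z - p))"
    by (simp add: Re_cinner_self)
  moreover have "cinner z p = complex_of_real B"
    using pz cnj_cinner[of p z] by simp
  ultimately have "0 \<le> (norm z)^2 - B"
    using pz by (simp add: cinner_diff_left cinner_diff_right pp Re_cinner_self)
  then show ?thesis
    by (simp add: B_def a_def)
qed

lemma quadratic_form_mfun_square: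
  assumes "hermitian A"
  shows "Re (cinner y (mfun (\<lambda>t. (g t)^2) A *v y)) = (norm (mfun g A *v y))^2"
proof -
  have "mfun (\<lambda>t. (g t)^2) A = mfun g A ** mfun g A"
    by (simp add: mfun_mult[OF assms] power2_eq_square)
  then have "cinner y (mfun (\<lambda>t. (g t)^2) A *v y) = cinner (mfun g A *v y) (mfun g A *v y)"
    by (simp add: matrix_vector_mul_assoc[symmetric] hermitian_cinner[OF hermitian_mfun[OF assms], of y])
  then show ?thesis
    by (simp add: Re_cinner_self)
qed

lemma mfun_mabs_adj_eigenvector:
  assumes "(S ** adj S) *v u = complex_of_real e *s u"
  shows "mfun h (mabs (adj S)) *v u = complex_of_real (h (sqrt e)) *s u"
proof -
  have herm: "hermitian (S ** adj S)"
    using hermitian_adj_mult_self[of "adj S"] by simp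
  have "mfun h (mabs (adj S)) = mfun (h \<circ> sqrt) (S ** adj S)"
    unfolding mabs_def adj_adj by (rule mfun_comp[OF herm])
  then show ?thesis
    using mfun_eigenvector[OF herm assms, of "h \<circ> sqrt"] by simp
qed

lemma mv_eq_sum_columns: "(A::complex^'n^'m) *v c = (\<Sum>j\<in>UNIV. c $ j *s (A *v axis j 1))"
  unfolding vec_eq_iff sum_component vector_smult_component mv_axis_nth
  by (simp add: matrix_vector_mult_def mult.commute)

lemma cinner_mv_eigenbasis:
  assumes V: "unitary V" and M: "adj S ** S = V ** rdiag e ** adj V"
  shows "cinner (S *v (V *v axis i 1)) (S *v (V *v axis j 1)) = (if i = j then complex_of_real (e j) else 0)"
proof -
  have "cinner (S *v (V *v axis i 1)) (S *v (V *v axis j 1))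
      = cinner (V *v axis i 1) ((adj S ** S) *v (V *v axis j 1))"
    by (metis adj_adj cinner_adj matrix_vector_mul_assoc)
  also have "\<dots> = complex_of_real (e j) * cinner (V *v axis i 1) (V *v axis j 1)"
    by (simp only: M unitary_diag_mv_column[OF V] cinner_scale_right)
  finally show ?thesis
    by (simp add: unitary_cinner[OF V] cinner_axis)
qed

text \<open>A singular value decomposition \<open>S V = U diag (sqrt e)\<close>, in which the columns \<open>u j\<close> are
  only required to be orthonormal where the singular value is nonzero.\<close>
lemma singular_vectors:
  fixes S :: "complex^'n^'n"
  obtains V e u where "unitary V" "\<And>j. e j \<ge> 0" "mabs S = V ** rdiag (sqrt \<circ> e) ** adj V"
    "\<And>j. S *v (V *v axis j 1) = complex_of_real (sqrt (e j)) *s u j"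
    "\<And>i j. e i > 0 \<Longrightarrow> e j > 0 \<Longrightarrow> cinner (u i) (u j) = (if i = j then 1 else 0)"
    "\<And>j. (S ** adj S) *v u j = complex_of_real (e j) *s u j"
proof -
  obtain V e where V: "unitary V" and M: "adj S ** S = V ** rdiag e ** adj V" and e: "\<And>j. e j \<ge> 0"
    using psd_unitary_diagonalization[OF psd_adj_mult_self] by blast
  define w where "w j = S *v (V *v axis j 1)" for j
  define u where "u j = complex_of_real (1 / sqrt (e j)) *s w j" for j
  have Mv: "(adj S ** S) *v (V *v axis j 1) = complex_of_real (e j) *s (V *v axis j 1)" for j
    unfolding M by (rule unitary_diag_mv_column[OF V])
  have ww: "cinner (w i) (w j) = (if i = j then complex_of_real (e j) else 0)" for i j
    unfolding w_def by (rule cinner_mv_eigenbasis[OF V M])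
  have "w j = complex_of_real (sqrt (e j)) *s u j" for j
  proof (cases "e j = 0")
    case True
    then show ?thesis
      using ww[of j j] by (simp add: cinner_self_eq_0)
  next
    case False
    then show ?thesis
      using e[of j] by (simp add: u_def vector_smult_assoc flip: of_real_mult)
  qed
  moreover have "cinner (u i) (u j) = (if i = j then 1 else 0)" if "e i > 0" "e j > 0" for i j
    using that by (simp add: u_def cinner_scale_left cinner_scale_right ww field_simps
        flip: of_real_mult)
  moreover have "(S ** adj S) *v u j = complex_of_real (e j) *s u j" for j
  proof -
    have "(S ** adj S) *v w j = S *v ((adj S ** S) *v (V *v axis j 1))"
      by (simp add: w_def matrix_vector_mul_assoc matrix_mul_assoc)
    also have "\<dots> = complex_of_real (e j) *s w j"
      by (simp add: Mv vector_scalar_commute w_def)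
    finally show ?thesis
      by (simp add: u_def vector_scalar_commute vector_smult_assoc mult.commute)
  qed
  moreover have "mabs S = V ** rdiag (sqrt \<circ> e) ** adj V"
    unfolding mabs_def by (rule mfun_eq[OF V M])
  ultimately show ?thesis
    using V e by (intro that[of V e u]) (simp_all add: w_def)
qed

lemma bessel_mfun_mabs_adj:
  fixes u :: "'n \<Rightarrow> complex^'n"
  assumes eig: "\<And>j. (S ** adj S) *v u j = complex_of_real (e j) *s u j"
    and orthonormal: "\<And>i j. i \<in> J \<Longrightarrow> j \<in> J \<Longrightarrow> cinner (u i) (u j) = (if i = j then 1 else 0)"
  shows "(\<Sum>j\<in>J. (cmod (complex_of_real (g (sqrt (e j))) * cinner y (u j)))^2)
    \<le> Re (cinner y (mfun (\<lambda>t. (g t)^2) (mabs (adj S)) *v y))"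
proof -
  define R where "R = mfun g (mabs (adj S))"
  have "cinner (u j) (R *v y) = complex_of_real (g (sqrt (e j))) * cinner (u j) y" for j
    unfolding R_def hermitian_cinner[OF hermitian_mfun[OF hermitian_mabs]]
    by (simp add: mfun_mabs_adj_eigenvector[OF eig] cinner_scale_left)
  moreover have "cmod (cinner (u j) y) = cmod (cinner y (u j))" for j
    by (metis cnj_cinner complex_mod_cnj)
  ultimately have "cmod (complex_of_real (g (sqrt (e j))) * cinner y (u j)) = cmod (cinner (u j) (R *v y))" for j
    by (simp add: norm_mult)
  then show ?thesis
    using bessel_inequality[of J u "R *v y", OF finite orthonormal]
    by (simp add: R_def quadratic_form_mfun_square[OF hermitian_mabs])
qed

lemma quadratic_form_mfun_unitary_diag:
  assumes "unitary U" and "A = U ** rdiag d ** adj U"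
  shows "Re (cinner x (mfun h A *v x)) = (\<Sum>i\<in>UNIV. h (d i) * (cmod ((adj U *v x) $ i))^2)"
  by (simp add: mfun_eq[OF assms] unitary_diag_quadratic_form[OF assms(1)])

lemma mixed_schwarz:
  fixes S :: "complex^'n^'n"
  assumes fg: "\<And>t. t \<ge> 0 \<Longrightarrow> f t * g t = t"
  shows "(cmod (cinner y (S *v x)))^2 \<le>
    Re (cinner x (mfun (\<lambda>t. (f t)^2) (mabs S) *v x)) * Re (cinner y (mfun (\<lambda>t. (g t)^2) (mabs (adj S)) *v y))"
proof -
  obtain V e u where V: "unitary V" and e: "\<And>j. e j \<ge> 0" and mabs: "mabs S = V ** rdiag (sqrt \<circ> e) ** adj V"
    and Sv: "\<And>j. S *v (V *v axis j 1) = complex_of_real (sqrt (e j)) *s u j"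
    and u: "\<And>i j. e i > 0 \<Longrightarrow> e j > 0 \<Longrightarrow> cinner (u i) (u j) = (if i = j then 1 else 0)"
    and Nu: "\<And>j. (S ** adj S) *v u j = complex_of_real (e j) *s u j"
    using singular_vectors[of S] by blast
  define J where "J = {j. e j > 0}"
  define c where "c = adj V *v x"
  define a where "a j = complex_of_real (f (sqrt (e j))) * c $ j" for j
  define b where "b j = complex_of_real (g (sqrt (e j))) * cinner y (u j)" for j
  have "S *v x = (S ** V) *v c"
    using V by (simp add: c_def matrix_vector_mul_assoc unitary_cancel_right)
  also have "\<dots> = (\<Sum>j\<in>UNIV. c $ j *s (S *v (V *v axis j 1)))"
    by (simp add: mv_eq_sum_columns[of "S ** V" c] matrix_vector_mul_assoc)
  finally have "cinner y (S *v x) = (\<Sum>j\<in>UNIV. c $ j * (sqrt (e j) * cinner y (u j)))"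
    by (simp add: cinner_sum_right cinner_scale_right Sv vector_smult_assoc mult.assoc)
  also have "\<dots> = (\<Sum>j\<in>J. c $ j * (sqrt (e j) * cinner y (u j)))"
    using e by (intro sum.mono_neutral_right) (auto simp: J_def less_eq_real_def)
  also have "\<dots> = (\<Sum>j\<in>J. a j * b j)"
    using fg[OF real_sqrt_ge_zero[OF e]] by (intro sum.cong refl) (simp add: a_def b_def flip: of_real_mult)
  finally have CS: "(cmod (cinner y (S *v x)))^2 \<le> (\<Sum>j\<in>J. (cmod (a j))^2) * (\<Sum>j\<in>J. (cmod (b j))^2)"
    by (simp only: cmod_sum_mult_square_le)
  have A: "(\<Sum>j\<in>J. (cmod (a j))^2) \<le> Re (cinner x (mfun (\<lambda>t. (f t)^2) (mabs S) *v x))"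
  proof -
    have "(\<Sum>j\<in>J. (cmod (a j))^2) \<le> (\<Sum>j\<in>UNIV. (cmod (a j))^2)"
      by (rule sum_mono2) auto
    then show ?thesis
      by (simp add: quadratic_form_mfun_unitary_diag[OF V mabs] a_def c_def norm_mult power_mult_distrib)
  qed
  have B: "(\<Sum>j\<in>J. (cmod (b j))^2) \<le> Re (cinner y (mfun (\<lambda>t. (g t)^2) (mabs (adj S)) *v y))"
    unfolding b_def using Nu u by (intro bessel_mfun_mabs_adj) (auto simp: J_def)
  have "0 \<le> (\<Sum>j\<in>J. (cmod (a j))^2)" "0 \<le> (\<Sum>j\<in>J. (cmod (b j))^2)"
    by (simp_all add: sum_nonneg)
  then show ?thesis
    using CS mult_mono[OF A B] A by linarith
qed

section \<open>Positive block matrices\<close>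

text \<open>Nonnegativity of the quadratic form of the block matrix \<open>[[A, X], [X, B]]\<close> at \<open>(x, y)\<close>,
  for Hermitian \<open>X\<close>.\<close>
definition block_form_nonneg :: "complex^'n^'n \<Rightarrow> complex^'n^'n \<Rightarrow> complex^'n^'n \<Rightarrow> bool" where
  "block_form_nonneg A X B \<longleftrightarrow>
    (\<forall>x y. 0 \<le> Re (cinner x (A *v x)) + Re (cinner y (B *v y)) + 2 * Re (cinner y (X *v x)))"

lemma sum_UNIV_Plus:
  "(\<Sum>k\<in>(UNIV :: ('a::finite + 'b::finite) set). h k) = (\<Sum>i\<in>UNIV. h (Inl i)) + (\<Sum>i\<in>UNIV. h (Inr i))"
  using sum.Plus[of "UNIV :: 'a set" "UNIV :: 'b set" h] by (simp add: comp_def)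

lemma cinner_blockM:
  fixes z :: "complex^('n::finite + 'n)"
  defines "x \<equiv> (\<chi> i. z $ Inl i)" and "y \<equiv> (\<chi> i. z $ Inr i)"
  shows "cinner z (blockM A B C D *v z) = cinner x (A *v x + B *v y) + cinner y (C *v x + D *v y)"
  unfolding cinner_def sum_UNIV_Plus
  by (simp add: blockM_def matrix_vector_mult_def sum_UNIV_Plus x_def y_def)

lemma adj_blockM: "adj (blockM A B C D) = blockM (adj A) (adj C) (adj B) (adj D)"
  by (simp add: vec_eq_iff blockM_def split: sum.split)

lemma psd_blockM:
  assumes "hermitian A" "hermitian B" "hermitian X" and "block_form_nonneg A X B"
  shows "psd (blockM A X X B)"
proof -
  have "Re (cinner z (blockM A X X B *v z)) \<ge> 0" for z :: "complex^('a + 'a)"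
  proof -
    define x where "x = (\<chi> i. z $ Inl i)"
    define y where "y = (\<chi> i. z $ Inr i)"
    have "Re (cinner x (X *v y)) = Re (cinner y (X *v x))"
      by (metis Re_cinner_commute assms(3) hermitian_cinner)
    then have "Re (cinner z (blockM A X X B *v z)) =
        Re (cinner x (A *v x)) + Re (cinner y (B *v y)) + 2 * Re (cinner y (X *v x))"
      unfolding cinner_blockM x_def[symmetric] y_def[symmetric] by (simp add: cinner_add_right)
    then show ?thesis
      using assms(4) by (simp add: block_form_nonneg_def)
  qed
  then show ?thesis
    using assms(1-3) by (simp add: psd_iff hermitian_def adj_blockM)
qed

lemma block_form_nonneg_uminus:
  assumes "block_form_nonneg A X B"
  shows "block_form_nonneg A (- X) B"
  unfolding block_form_nonneg_def
proof (intro allI)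
  fix x y :: "complex^'a"
  show "0 \<le> Re (cinner x (A *v x)) + Re (cinner y (B *v y)) + 2 * Re (cinner y (- X *v x))"
    using assms[unfolded block_form_nonneg_def, rule_format, of x "- y"]
    by (simp add: matrix_vector_mult_uminus_left matrix_vector_mult_uminus_right
        cinner_uminus_left cinner_uminus_right)
qed

lemma block_form_nonneg_mono:
  assumes "block_form_nonneg A X B" "loewner_le A A'" "loewner_le B B'"
  shows "block_form_nonneg A' X B'"
  unfolding block_form_nonneg_def
proof (intro allI)
  fix x y :: "complex^'a"
  show "0 \<le> Re (cinner x (A' *v x)) + Re (cinner y (B' *v y)) + 2 * Re (cinner y (X *v x))"
    using assms(1)[unfolded block_form_nonneg_def, rule_format, of x y]
      loewner_le_form[OF assms(2), of x] loewner_le_form[OF assms(3), of y]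
    by linarith
qed

lemma loewner_le_of_block_form_nonneg:
  assumes "block_form_nonneg A X A" "hermitian A" "hermitian X"
  shows "loewner_le X A"
proof -
  have "Re (cinner x (X *v x)) \<le> Re (cinner x (A *v x))" for x
    using assms(1)[unfolded block_form_nonneg_def, rule_format, of x "- x"]
    by (simp add: matrix_vector_mult_uminus_right cinner_uminus_left cinner_uminus_right)
  then show ?thesis
    using assms(2,3) by (simp add: loewner_le_iff_forms)
qed

lemma hermitian_ReM: "hermitian (ReM T)"
  by (simp add: hermitian_def ReM_def adj_cscale adj_add add.commute)

lemma hermitian_ImM: "hermitian (ImM T)"
proof -
  have "cnj (1 / (2 * \<i>)) = - (1 / (2 * \<i>))"
    by (simp add: complex_eq_iff)
  then show ?thesis
    by (simp add: hermitian_def ImM_def adj_cscale adj_diff vec_eq_iff algebra_simps)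
qed

lemma cinner_ReM_plus_ImM:
  "cinner y ((ReM T + ImM T) *v x) =
    Complex (1/2) (-1/2) * cinner y (T *v x) + Complex (1/2) (1/2) * cinner y (adj T *v x)"
proof -
  have inverse_2i: "1 / (2 * \<i>) = Complex 0 (-1/2)"
    by (simp add: complex_eq_iff)
  show ?thesis
    unfolding ReM_def ImM_def matrix_vector_mult_add_rdistrib cscale_mv inverse_2i
    by (simp add: cinner_add_right cinner_diff_right cinner_scale_right matrix_vector_mult_diff_rdistrib
        matrix_vector_mult_add_rdistrib complex_eq_iff algebra_simps)
qed

lemma mixed_schwarz_am_gm:
  assumes "\<And>t. t \<ge> 0 \<Longrightarrow> f t * g t = t"
  shows "2 * cmod (cinner y (S *v x)) \<le>
    Re (cinner x (mfun (\<lambda>t. (f t)^2) (mabs S) *v x)) + Re (cinner y (mfun (\<lambda>t. (g t)^2) (mabs (adj S)) *v y))"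
proof -
  define a where "a = Re (cinner x (mfun (\<lambda>t. (f t)^2) (mabs S) *v x))"
  define b where "b = Re (cinner y (mfun (\<lambda>t. (g t)^2) (mabs (adj S)) *v y))"
  have "a \<ge> 0" "b \<ge> 0"
    using psd_mfun[OF hermitian_mabs, of "\<lambda>t. (f t)^2" S] psd_mfun[OF hermitian_mabs, of "\<lambda>t. (g t)^2" "adj S"]
    by (simp_all add: a_def b_def psd_iff)
  have "cmod (cinner y (S *v x)) = sqrt ((cmod (cinner y (S *v x)))^2)"
    by simp
  also have "\<dots> \<le> sqrt (a * b)"
    unfolding a_def b_def by (rule real_sqrt_le_mono[OF mixed_schwarz[OF assms]])
  also have "\<dots> \<le> (a + b) / 2"
    using \<open>a \<ge> 0\<close> \<open>b \<ge> 0\<close> by (rule arith_geo_mean_sqrt)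
  finally show ?thesis
    by (simp add: a_def b_def)
qed

lemma block_form_nonneg_Re_plus_Im:
  fixes T :: "complex^'n^'n"
  assumes "\<And>t. t \<ge> 0 \<Longrightarrow> f t * g t = t"
  shows "block_form_nonneg
    (mfun (\<lambda>t. (f t)^2) (mabs T) + mfun (\<lambda>t. (f t)^2) (mabs (adj T))) (ReM T + ImM T)
    (mfun (\<lambda>t. (g t)^2) (mabs T) + mfun (\<lambda>t. (g t)^2) (mabs (adj T)))"
  unfolding block_form_nonneg_def
proof (intro allI)
  fix x y :: "complex^'n"
  define p where "p = cinner y (T *v x)"
  define q where "q = cinner y (adj T *v x)"
  define z where "z = Complex (1/2) (-1/2) * p + Complex (1/2) (1/2) * q"
  have "cmod z \<le> cmod (Complex (1/2) (-1/2)) * cmod p + cmod (Complex (1/2) (1/2)) * cmod q"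
    unfolding z_def by (metis norm_mult norm_triangle_ineq)
  also have "\<dots> \<le> cmod p + cmod q"
    using cmod_le[of "Complex (1/2) (-1/2)"] cmod_le[of "Complex (1/2) (1/2)"]
    by (intro add_mono mult_left_le_one_le) simp_all
  finally have "- (cmod p + cmod q) \<le> Re (cinner y ((ReM T + ImM T) *v x))"
    using abs_Re_le_cmod[of z] unfolding cinner_ReM_plus_ImM p_def[symmetric] q_def[symmetric] z_def
    by linarith
  moreover have "2 * cmod p \<le> Re (cinner x (mfun (\<lambda>t. (f t)^2) (mabs T) *v x))
      + Re (cinner y (mfun (\<lambda>t. (g t)^2) (mabs (adj T)) *v y))"
    unfolding p_def by (rule mixed_schwarz_am_gm[OF assms])
  moreover have "2 * cmod q \<le> Re (cinner x (mfun (\<lambda>t. (f t)^2) (mabs (adj T)) *v x))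
      + Re (cinner y (mfun (\<lambda>t. (g t)^2) (mabs T) *v y))"
    using mixed_schwarz_am_gm[OF assms, of y "adj T" x] unfolding q_def by simp
  ultimately show "0 \<le> Re (cinner x ((mfun (\<lambda>t. (f t)^2) (mabs T) + mfun (\<lambda>t. (f t)^2) (mabs (adj T))) *v x))
      + Re (cinner y ((mfun (\<lambda>t. (g t)^2) (mabs T) + mfun (\<lambda>t. (g t)^2) (mabs (adj T))) *v y))
      + 2 * Re (cinner y ((ReM T + ImM T) *v x))"
    unfolding matrix_vector_mult_add_rdistrib cinner_add_right plus_complex.sel by argo
qed

section \<open>The matrix geometric mean\<close>

definition posdef :: "complex^'n^'n \<Rightarrow> bool" where
  "posdef A \<longleftrightarrow> hermitian A \<and> (\<forall>x. x \<noteq> 0 \<longrightarrow> 0 < Re (cinner x (A *v x)))"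

lemma posdef_eigenvalues_pos:
  assumes "posdef A" and U: "unitary U" and A: "A = U ** rdiag d ** adj U"
  shows "d i > 0"
proof -
  have unit: "cinner (U *v axis i 1) (U *v axis i 1) = 1"
    by (simp add: unitary_cinner[OF U] cinner_axis)
  then have "U *v axis i 1 \<noteq> 0"
    by auto
  moreover have "cinner (U *v axis i 1) (A *v (U *v axis i 1)) = complex_of_real (d i)"
    by (simp add: A unitary_diag_mv_column[OF U] cinner_scale_right unit)
  ultimately show ?thesis
    using assms(1) unfolding posdef_def by (metis Re_complex_of_real)
qed

lemma psd_of_posdef:
  assumes "posdef A"
  shows "psd A"
proof -
  have "0 \<le> Re (cinner x (A *v x))" for x
    using assms by (cases "x = 0") (auto simp: posdef_def less_imp_le)
  then show ?thesis
    using assms by (simp add: psd_iff posdef_def)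
qed

lemma quadratic_form_shift:
  "Re (cinner x ((A + cscale (complex_of_real e) (mat 1)) *v x)) = Re (cinner x (A *v x)) + e * (norm x)^2"
  by (simp add: matrix_vector_mult_add_rdistrib cscale_mv cinner_add_right cinner_scale_right cinner_self)

lemma hermitian_shift: "hermitian A \<Longrightarrow> hermitian (A + cscale (complex_of_real e) (mat 1))"
  by (simp add: hermitian_def adj_add adj_cscale)

lemma posdef_shift:
  assumes "psd A" and "e > 0"
  shows "posdef (A + cscale (complex_of_real e) (mat 1))"
  using assms by (auto simp: posdef_def psd_iff hermitian_shift quadratic_form_shift add_nonneg_pos)

lemma loewner_le_shift:
  assumes "hermitian A" and "e \<le> e'"
  shows "loewner_le (A + cscale (complex_of_real e) (mat 1)) (A + cscale (complex_of_real e') (mat 1))"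
  using assms by (simp add: loewner_le_iff_forms hermitian_shift quadratic_form_shift mult_right_mono)

lemma posdef_sqrt_inverse:
  assumes "posdef A"
  defines "K \<equiv> mfun sqrt A" and "H \<equiv> mfun (\<lambda>t. 1 / sqrt t) A"
  shows "hermitian K" "hermitian H" "H ** K = mat 1" "K ** H = mat 1" "K ** K = A"
proof -
  have "hermitian A"
    using assms(1) by (simp add: posdef_def)
  then obtain U d where U: "unitary U" and A: "A = U ** rdiag d ** adj U"
    by (rule hermitian_unitary_diagonalization)
  have d: "d i > 0" for i
    using posdef_eigenvalues_pos[OF assms(1) U A] .
  have d_ne: "d i \<noteq> 0" and d_ge: "d i \<ge> 0" for i
    using d[of i] by simp_all
  have K: "K = U ** rdiag (sqrt \<circ> d) ** adj U" and H: "H = U ** rdiag ((\<lambda>t. 1 / sqrt t) \<circ> d) ** adj U"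
    unfolding K_def H_def by (simp_all add: mfun_eq[OF U A])
  show "hermitian K" "hermitian H"
    by (simp_all add: K H hermitian_unitary_diag)
  have inverse: "(\<lambda>i. ((\<lambda>t. 1 / sqrt t) \<circ> d) i * (sqrt \<circ> d) i) = (\<lambda>i. 1)"
      "(\<lambda>i. (sqrt \<circ> d) i * ((\<lambda>t. 1 / sqrt t) \<circ> d) i) = (\<lambda>i. 1)"
    by (simp_all add: fun_eq_iff d_ne)
  have square: "(\<lambda>i. (sqrt \<circ> d) i * (sqrt \<circ> d) i) = d"
    by (simp add: fun_eq_iff d_ge)
  show "H ** K = mat 1" "K ** H = mat 1"
    unfolding H K unitary_diag_mult[OF U] inverse rdiag_one using U by (simp_all add: unitary_mult_adj)
  show "K ** K = A"
    unfolding K unitary_diag_mult[OF U] square A ..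
qed

lemma block_form_nonneg_congruence:
  assumes "block_form_nonneg A Y B" and "hermitian H"
  shows "block_form_nonneg (H ** A ** H) (H ** Y ** H) (H ** B ** H)"
proof -
  have "cinner x ((H ** M ** H) *v y) = cinner (H *v x) (M *v (H *v y))" for x y M
    by (simp add: matrix_vector_mul_assoc[symmetric] hermitian_cinner[OF assms(2)])
  then show ?thesis
    using assms(1) by (simp add: block_form_nonneg_def)
qed

lemma square_le_of_block_form_nonneg:
  assumes "block_form_nonneg (mat 1) W C" and "hermitian W" "hermitian C"
  shows "loewner_le (W ** W) C"
proof -
  have "Re (cinner y ((W ** W) *v y)) \<le> Re (cinner y (C *v y))" for y
  proof -
    have "cinner y ((W ** W) *v y) = cinner (W *v y) (W *v y)"
      by (simp add: matrix_vector_mul_assoc[symmetric] hermitian_cinner[OF assms(2), of y])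
    moreover have "cinner y (W *v (- (W *v y))) = - cinner (W *v y) (W *v y)"
      by (simp add: matrix_vector_mult_uminus_right cinner_uminus_right hermitian_cinner[OF assms(2), of y])
    ultimately show ?thesis
      using assms(1)[unfolded block_form_nonneg_def, rule_format, of "- (W *v y)" y]
      by (simp add: cinner_uminus_left cinner_uminus_right)
  qed
  moreover have "hermitian (W ** W)"
    using assms(2) by (simp add: hermitian_def adj_mult)
  ultimately show ?thesis
    using assms(3) by (simp add: loewner_le_iff_forms)
qed

lemma loewner_le_mfun_abs:
  assumes "hermitian W"
  shows "loewner_le W (mfun abs W)"
proof -
  obtain U c where U: "unitary U" and W: "W = U ** rdiag c ** adj U"
    using hermitian_unitary_diagonalization[OF assms] .
  have "mfun abs W = U ** rdiag (abs \<circ> c) ** adj U"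
    by (rule mfun_eq[OF U W])
  then have "mfun abs W - W = U ** rdiag (\<lambda>i. \<bar>c i\<bar> - c i) ** adj U"
    unfolding W by (simp add: unitary_diag_diff comp_def)
  then show ?thesis
    by (simp add: loewner_le_def psd_unitary_diag_iff[OF U] abs_ge_self)
qed

lemma mfun_abs_square:
  assumes "hermitian W"
  shows "mfun abs W ** mfun abs W = W ** W"
proof -
  have "mfun abs W ** mfun abs W = mfun (\<lambda>t. t * t) W"
    by (simp add: mfun_mult[OF assms] abs_mult_self_eq)
  also have "\<dots> = W ** W"
    by (simp add: mfun_mult[OF assms, symmetric] mfun_id[OF assms])
  finally show ?thesis .
qed

lemma psd_gmean_pd:
  assumes "posdef A" and "psd B"
  shows "psd (gmean_pd A B)"
proof -
  have "hermitian (mfun (\<lambda>t. 1 / sqrt t) A)"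
    by (rule posdef_sqrt_inverse(2)[OF assms(1)])
  then have "psd (mfun sqrt (mfun (\<lambda>t. 1 / sqrt t) A ** B ** mfun (\<lambda>t. 1 / sqrt t) A))"
    using assms(2) by (intro psd_mfun_nonneg psd_congruence) simp_all
  then show ?thesis
    unfolding gmean_pd_def by (rule psd_congruence[OF posdef_sqrt_inverse(1)[OF assms(1)]])
qed

lemma gmean_pd_greatest:
  assumes A: "posdef A" and B: "psd B" and Y: "hermitian Y" and block: "block_form_nonneg A Y B"
  shows "loewner_le Y (gmean_pd A B)"
proof -
  define K where "K = mfun sqrt A"
  define H where "H = mfun (\<lambda>t. 1 / sqrt t) A"
  have K: "hermitian K" and H: "hermitian H" and HK: "H ** K = mat 1" and KH: "K ** H = mat 1"
    and KK: "K ** K = A"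
    using posdef_sqrt_inverse[OF A] unfolding K_def H_def by auto
  define C where "C = H ** B ** H"
  define W where "W = H ** Y ** H"
  have C: "psd C"
    unfolding C_def by (rule psd_congruence[OF H B])
  have W: "hermitian W"
    unfolding W_def by (rule hermitian_congruence[OF H Y])
  have "H ** A ** H = mat 1"
    by (metis HK KH KK matrix_mul_assoc matrix_mul_lid)
  then have "block_form_nonneg (mat 1) W C"
    using block_form_nonneg_congruence[OF block H] by (simp add: C_def W_def)
  moreover have "hermitian C"
    using C by (simp add: psd_iff)
  ultimately have "loewner_le (W ** W) C"
    by (rule square_le_of_block_form_nonneg[OF _ W])
  then have "loewner_le (mfun abs W ** mfun abs W) (mfun sqrt C ** mfun sqrt C)"
    by (simp only: mfun_abs_square[OF W] mfun_sqrt_square[OF C])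
  moreover have "psd (mfun abs W)" "psd (mfun sqrt C)"
    by (simp_all add: psd_mfun[OF W] psd_mfun_nonneg[OF C])
  ultimately have "loewner_le (mfun abs W) (mfun sqrt C)"
    using loewner_le_of_square_le by blast
  then have "loewner_le W (mfun sqrt C)"
    by (rule loewner_trans[OF loewner_le_mfun_abs[OF W]])
  then have "loewner_le (K ** W ** K) (K ** mfun sqrt C ** K)"
    by (rule loewner_congruence[OF K])
  moreover have "K ** W ** K = Y"
    unfolding W_def by (simp add: matrix_mul_assoc KH) (simp add: matrix_mul_assoc[symmetric] HK)
  ultimately show ?thesis
    by (simp add: gmean_pd_def K_def H_def C_def)
qed

text \<open>With \<open>K = A\<^sup>1\<^sup>/\<^sup>2\<close> and \<open>Z = (A\<^sup>-\<^sup>1\<^sup>/\<^sup>2 B A\<^sup>-\<^sup>1\<^sup>/\<^sup>2)\<^sup>1\<^sup>/\<^sup>2\<close>, so that \<open>A \<sharp> B = K Z K\<close>, the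
  form at \<open>(x, y)\<close> is \<open>\<parallel>K x + Z K y\<parallel>\<^sup>2\<close>.\<close>
lemma block_form_nonneg_gmean_pd:
  assumes A: "posdef A" and B: "psd B"
  shows "block_form_nonneg A (gmean_pd A B) B"
  unfolding block_form_nonneg_def
proof (intro allI)
  fix x y :: "complex^'a"
  define K where "K = mfun sqrt A"
  define H where "H = mfun (\<lambda>t. 1 / sqrt t) A"
  define Z where "Z = mfun sqrt (H ** B ** H)"
  have K: "hermitian K" and HK: "H ** K = mat 1" and KH: "K ** H = mat 1" and KK: "K ** K = A"
    using posdef_sqrt_inverse[OF A] unfolding K_def H_def by auto
  have C: "psd (H ** B ** H)"
    using psd_congruence[OF posdef_sqrt_inverse(2)[OF A] B] by (simp add: H_def)
  have "psd Z"
    unfolding Z_def by (rule psd_mfun_nonneg[OF C]) simp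
  then have Z: "hermitian Z"
    by (simp add: psd_iff)
  have G: "gmean_pd A B = K ** Z ** K"
    by (simp add: gmean_pd_def K_def H_def Z_def)
  have "K ** (Z ** Z) ** K = B"
    unfolding Z_def mfun_sqrt_square[OF C]
    by (simp add: matrix_mul_assoc KH) (simp add: matrix_mul_assoc[symmetric] HK)
  define p where "p = K *v x"
  define q where "q = Z *v (K *v y)"
  have "cinner x (A *v x) = cinner p p"
    by (simp add: p_def KK[symmetric] matrix_vector_mul_assoc[symmetric] hermitian_cinner[OF K])
  moreover have "cinner y (B *v y) = cinner q q"
    by (simp add: q_def \<open>K ** (Z ** Z) ** K = B\<close>[symmetric] matrix_vector_mul_assoc[symmetric]
        hermitian_cinner[OF K] hermitian_cinner[OF Z])
  moreover have "cinner y (gmean_pd A B *v x) = cinner q p"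
    by (simp add: G q_def p_def matrix_vector_mul_assoc[symmetric] hermitian_cinner[OF K]
        hermitian_cinner[OF Z])
  moreover have "0 \<le> Re (cinner (p + q) (p + q))"
    by (simp add: Re_cinner_self)
  ultimately show "0 \<le> Re (cinner x (A *v x)) + Re (cinner y (B *v y)) + 2 * Re (cinner y (gmean_pd A B *v x))"
    by (simp add: cinner_add_left cinner_add_right Re_cinner_commute[of p q])
qed

lemma tendsto_of_quadratic_forms:
  fixes M :: "'a \<Rightarrow> complex^'n^'n"
  assumes forms: "\<And>x. \<exists>l. ((\<lambda>e. cinner x (M e *v x)) \<longlongrightarrow> l) F"
  obtains L where "(M \<longlongrightarrow> L) F"
proof -
  have "\<exists>l. ((\<lambda>e. M e $ i $ j) \<longlongrightarrow> l) F" for i j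
  proof -
    define Q where "Q z e = cinner z (M e *v z)" for z e
    define u v :: "complex^'n" where "u = axis i 1" and "v = axis j 1"
    have "\<exists>l. (Q z \<longlongrightarrow> l) F" for z
      using forms unfolding Q_def by blast
    then obtain l where l: "\<And>z. (Q z \<longlongrightarrow> l z) F"
      by metis
    have "(\<lambda>e. M e $ i $ j) =
        (\<lambda>e. (Q (u + 1 *s v) e - Q (u + (-1) *s v) e - \<i> * (Q (u + \<i> *s v) e - Q (u + (-\<i>) *s v) e)) / 4)"
      unfolding Q_def u_def v_def cinner_axis_mv_axis[symmetric] by (rule ext, rule polarization)
    moreover have "((\<lambda>e. (Q (u + 1 *s v) e - Q (u + (-1) *s v) e - \<i> * (Q (u + \<i> *s v) e - Q (u + (-\<i>) *s v) e)) / 4)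
        \<longlongrightarrow> (l (u + 1 *s v) - l (u + (-1) *s v) - \<i> * (l (u + \<i> *s v) - l (u + (-\<i>) *s v))) / 4) F"
      by (intro tendsto_intros l) simp
    ultimately show ?thesis
      by auto
  qed
  then obtain l where l: "\<And>i j. ((\<lambda>e. M e $ i $ j) \<longlongrightarrow> l i j) F"
    by metis
  have "(M \<longlongrightarrow> (\<chi> i j. l i j)) F"
    by (intro vec_tendstoI) (simp add: l)
  then show ?thesis
    by (rule that)
qed

lemma tendsto_matrix_nth:
  assumes "(M \<longlongrightarrow> L) F"
  shows "((\<lambda>e. M e $ i $ j) \<longlongrightarrow> L $ i $ j) F"
  using tendsto_vec_nth[OF tendsto_vec_nth[OF assms]] .

lemma hermitian_limit:
  assumes "(M \<longlongrightarrow> L) F" "F \<noteq> bot" "eventually (\<lambda>e. hermitian (M e)) F"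
  shows "hermitian L"
proof -
  have L_cnj: "L $ i $ j = cnj (L $ j $ i)" for i j
  proof -
    have "eventually (\<lambda>e. cnj (M e $ j $ i) = M e $ i $ j) F"
      using assms(3) by (rule eventually_mono) (simp add: hermitian_def flip: adj_nth)
    moreover have "((\<lambda>e. cnj (M e $ j $ i)) \<longlongrightarrow> cnj (L $ j $ i)) F"
      using tendsto_cnj[OF tendsto_matrix_nth[OF assms(1)]] .
    ultimately have "((\<lambda>e. M e $ i $ j) \<longlongrightarrow> cnj (L $ j $ i)) F"
      by (rule Lim_transform_eventually[rotated])
    then show ?thesis
      by (rule tendsto_unique[OF assms(2) tendsto_matrix_nth[OF assms(1)]])
  qed
  then show ?thesis
    unfolding hermitian_def vec_eq_iff adj_nth by metis
qed

lemma loewner_le_limit: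
  assumes "(M \<longlongrightarrow> L) F" "F \<noteq> bot" "hermitian X" "eventually (\<lambda>e. loewner_le X (M e)) F"
  shows "loewner_le X L"
proof -
  have "eventually (\<lambda>e. hermitian (M e)) F"
    using assms(4) by (rule eventually_mono) (rule loewner_le_hermitian[OF _ assms(3)])
  then have L: "hermitian L"
    by (rule hermitian_limit[OF assms(1,2)])
  have "Re (cinner x (X *v x)) \<le> Re (cinner x (L *v x))" for x
  proof (rule tendsto_lowerbound)
    show "((\<lambda>e. Re (cinner x (M e *v x))) \<longlongrightarrow> Re (cinner x (L *v x))) F"
      unfolding quadratic_form_eq_cinner[symmetric]
      by (intro tendsto_intros tendsto_matrix_nth[OF assms(1)])
    show "eventually (\<lambda>e. Re (cinner x (X *v x)) \<le> Re (cinner x (M e *v x))) F"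
      using assms(4) by (rule eventually_mono) (rule loewner_le_form)
  qed (rule assms(2))
  then show ?thesis
    using assms(3) L by (simp add: loewner_le_iff_forms)
qed

lemma quadratic_forms_converge_of_monotone:
  fixes M :: "real \<Rightarrow> complex^'n^'n"
  assumes mono: "\<And>e e'. 0 < e \<Longrightarrow> e \<le> e' \<Longrightarrow> loewner_le (M e) (M e')"
    and lower: "\<And>e. 0 < e \<Longrightarrow> loewner_le X (M e)" and X: "hermitian X"
  shows "\<exists>l. ((\<lambda>e. cinner x (M e *v x)) \<longlongrightarrow> l) (at_right 0)"
proof -
  define \<phi> where "\<phi> e = Re (cinner x (M e *v x))" for e
  have "(\<phi> \<longlongrightarrow> Inf (\<phi> ` ({0<..} \<inter> UNIV))) (at 0 within ({0<..} \<inter> UNIV))"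
    unfolding \<phi>_def using mono lower
    by (intro Lim_right_bound[where K = "Re (cinner x (X *v x))"]) (auto intro: loewner_le_form)
  then have "(\<phi> \<longlongrightarrow> Inf (\<phi> ` {0<..})) (at_right 0)"
    by simp
  then have "((\<lambda>e. complex_of_real (\<phi> e)) \<longlongrightarrow> complex_of_real (Inf (\<phi> ` {0<..}))) (at_right 0)"
    by (rule tendsto_of_real)
  moreover have "eventually (\<lambda>e. complex_of_real (\<phi> e) = cinner x (M e *v x)) (at_right 0)"
    using eventually_at_right_less[of 0]
  proof (rule eventually_mono)
    fix e :: real
    assume "0 < e"
    then show "complex_of_real (\<phi> e) = cinner x (M e *v x)"
      unfolding \<phi>_def by (rule hermitian_quadratic_form_real[OF loewner_le_hermitian[OF lower X], symmetric])
  qed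
  ultimately have "((\<lambda>e. cinner x (M e *v x)) \<longlongrightarrow> complex_of_real (Inf (\<phi> ` {0<..}))) (at_right 0)"
    by (rule Lim_transform_eventually)
  then show ?thesis
    by blast
qed

lemma loewner_lower_bound_of_monotone_limit:
  fixes M :: "real \<Rightarrow> complex^'n^'n"
  assumes "\<And>e e'. 0 < e \<Longrightarrow> e \<le> e' \<Longrightarrow> loewner_le (M e) (M e')"
    and lower: "\<And>e. 0 < e \<Longrightarrow> loewner_le X (M e)" and "hermitian X"
  obtains L where "(M \<longlongrightarrow> L) (at_right 0)" "loewner_le X L"
proof -
  obtain L where L: "(M \<longlongrightarrow> L) (at_right 0)"
    using quadratic_forms_converge_of_monotone[OF assms] by (rule tendsto_of_quadratic_forms)
  moreover have "eventually (\<lambda>e. loewner_le X (M e)) (at_right 0)"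
    using eventually_at_right_less[of 0] by (rule eventually_mono) (rule lower)
  then have "loewner_le X L"
    by (rule loewner_le_limit[OF L trivial_limit_at_right_real \<open>hermitian X\<close>])
  ultimately show ?thesis
    by (rule that)
qed

lemma gmean_greatest:
  fixes A B X :: "complex^'n^'n"
  assumes A: "psd A" and B: "psd B" and X: "hermitian X" and block: "block_form_nonneg A X B"
  shows "loewner_le X (gmean A B)"
proof -
  define S :: "real \<Rightarrow> complex^'n^'n" where "S e = cscale (complex_of_real e) (mat 1)" for e
  define M where "M e = gmean_pd (A + S e) (B + S e)" for e
  have pd: "posdef (A + S e)" "posdef (B + S e)" if "e > 0" for e
    unfolding S_def using A B that by (simp_all add: posdef_shift)
  have shift: "loewner_le (A + S e) (A + S e')" "loewner_le (B + S e) (B + S e')" if "e \<le> e'" for e e'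
    unfolding S_def using A B that by (simp_all add: loewner_le_shift psd_iff)
  have "S 0 = 0"
    by (simp add: S_def vec_eq_iff)
  then have "loewner_le A (A + S e)" "loewner_le B (B + S e)" if "e \<ge> 0" for e
    using shift[OF that] by simp_all
  then have block_shift: "block_form_nonneg (A + S e) X (B + S e)" if "e > 0" for e
    using block_form_nonneg_mono[OF block] that by simp
  have lower: "loewner_le X (M e)" if "e > 0" for e
    unfolding M_def
    using gmean_pd_greatest[OF pd(1)[OF that] psd_of_posdef[OF pd(2)[OF that]] X block_shift[OF that]] .
  have mono: "loewner_le (M e) (M e')" if "0 < e" "e \<le> e'" for e e'
  proof -
    have "0 < e'"
      using that by simp
    have "hermitian (M e)"
      using psd_gmean_pd[OF pd(1)[OF that(1)] psd_of_posdef[OF pd(2)[OF that(1)]]] by (simp add: M_def psd_iff)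
    moreover have "block_form_nonneg (A + S e') (M e) (B + S e')"
      unfolding M_def using block_form_nonneg_mono[OF block_form_nonneg_gmean_pd shift[OF that(2)]]
        pd[OF that(1)] psd_of_posdef by blast
    ultimately show ?thesis
      unfolding M_def[of e'] by (rule gmean_pd_greatest[OF pd(1)[OF \<open>0 < e'\<close>] psd_of_posdef[OF pd(2)[OF \<open>0 < e'\<close>]]])
  qed
  obtain L where L: "(M \<longlongrightarrow> L) (at_right 0)" and "loewner_le X L"
    using loewner_lower_bound_of_monotone_limit[of M X, OF mono lower X] by blast
  moreover have "gmean A B = L"
    unfolding gmean_def S_def[symmetric] M_def[symmetric]
    by (rule tendsto_Lim[OF trivial_limit_at_right_real L])
  ultimately show ?thesis
    by simp
qed

theorem mainTheorem15:
  fixes T :: "complex^'n^'n" and f g :: "real \<Rightarrow> real"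
  assumes "continuous_on {0..} f" and "continuous_on {0..} g"
    and "\<And>t. t \<ge> 0 \<Longrightarrow> f t \<ge> 0" and "\<And>t. t \<ge> 0 \<Longrightarrow> g t \<ge> 0"
    and "\<And>t. t \<ge> 0 \<Longrightarrow> f t * g t = t"
  defines "F \<equiv> mfun (\<lambda>t. (f t)^2) (mabs T) + mfun (\<lambda>t. (f t)^2) (mabs (adj T))"
    and "G \<equiv> mfun (\<lambda>t. (g t)^2) (mabs T) + mfun (\<lambda>t. (g t)^2) (mabs (adj T))"
    and "X \<equiv> ReM T + ImM T"
  shows "psd (blockM F X X G)
     \<and> loewner_le X (gmean F G) \<and> loewner_le (- X) (gmean F G)
     \<and> loewner_le X (mabs T + mabs (adj T)) \<and> loewner_le (- X) (mabs T + mabs (adj T))"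
proof -
  have block: "block_form_nonneg F X G"
    unfolding F_def G_def X_def by (rule block_form_nonneg_Re_plus_Im[OF assms(5)])
  have X: "hermitian X"
    unfolding X_def by (intro hermitian_add hermitian_ReM hermitian_ImM)
  define P where "P = mabs T + mabs (adj T)"
  have P: "hermitian P"
    unfolding P_def by (intro hermitian_add hermitian_mabs)
  have block_P: "block_form_nonneg P X P"
    using block_form_nonneg_Re_plus_Im[of sqrt sqrt T]
    by (simp add: P_def X_def mfun_power2_sqrt psd_mabs)
  have F: "psd F" and G: "psd G"
    unfolding F_def G_def by (intro psd_add psd_mfun hermitian_mabs; simp)+
  then have "psd (blockM F X X G)"
    using X block by (intro psd_blockM) (simp_all add: psd_iff)
  moreover have "loewner_le X (gmean F G)" "loewner_le (- X) (gmean F G)"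
    using gmean_greatest[OF F G X block]
      gmean_greatest[OF F G hermitian_uminus[OF X] block_form_nonneg_uminus[OF block]] by auto
  moreover have "loewner_le X P" "loewner_le (- X) P"
    using loewner_le_of_block_form_nonneg[OF block_P P X]
      loewner_le_of_block_form_nonneg[OF block_form_nonneg_uminus[OF block_P] P hermitian_uminus[OF X]]
    by auto
  ultimately show ?thesis
    by (simp add: P_def)
qed

end
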